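(* Let $y_C:\Delta_T\to[0,1]$ and a family $(\mu_t)_{t\in[0,T]}$ of probability measures on $W\times[0,1]$ satisfy all of the following: (1) $y_C((y_0,0),t)$ is non-decreasing in $y_0$, $y_C((0,t_0),t)$ is non-increasing in $t_0$, and $y_C(\gamma,t)$ is non-decreasing in $t$; (2) $y_C$ and $\partial y_C/\partial t$ are continuous on $\Delta_T$ and $y_C(\cdot,t):\Gamma_t\to[0,1]$ is surjective for each $t$; (3) for every measurable $h:W\to\mathbb{R}$ with $\sup_w|h(w)|\le1$ and all $(y,t),(y',t')\in[0,1]\times[0,T]$, $\bigl|\int_Wh(w)\mu_{t'}(dw\times[y',1))-\int_Wh(w)\mu_t(dw\times[y,1))\bigr|\le|y'-y|+M_We^{2C_WT}|t'-t|$; (4) $y_C((y_0,t_0),t_0)=y_0$ for $(y_0,t_0)\in\Gamma$; $\mu_0(dw\times dz)=\sigma(w,z)\lambda(dw)dz$; $\mu_t(dw\times[0,1))=\lambda(dw)$ for all $t$; $\mu_t(W\times[y,1))=1-y$ for all $(y,t)$; and for all $((y_0,t_0),t)\in\Delta_T$, as measures on $W$, $\mu_t(dw\times[y_C((y_0,t_0),t),1))=\mu_{t_0}(dw\times[y_0,1))-\int_{t_0}^t\int_{z\in[y_C((y_0,t_0),s),1)}w(z,s)\mu_s(dw\times dz)\,ds$. Then for every $\gamma=(y_0,t_0)\in\Gamma$ and $t\in[t_0,T]$, as measures on $W$, \[\mu_t(dw\times[y_C(\gamma,t),1))=e^{-\tilde\Omega_w(t_0,t)}\mu_{t_0}(dw\times[y_0,1))+\int_{t_0}^te^{-\tilde\Omega_w(s,t)}\int_{x\in[y_C(\gamma,s),1)}\frac{\partial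 w}{\partial y}(x,s)\,\mu_s(dw\times[y_C(\gamma,s),x))\,dx\,ds,\] where $\tilde\Omega_w(s,t)=\int_s^tw(1,u)\,du$.
   Context: Fix $T>0$. Let $W\subset C^1([0,1]\times[0,T];[0,\infty))$ be a set of non-negative $C^1$ functions $w(y,t)$, with Borel $\sigma$-algebra from the supremum norm $\|w\|=\sup_{(y,t)\in[0,1]\times[0,T]}|w(y,t)|$. Let $\lambda$ be a Borel probability measure on $W$ with $M_W:=\int_W\|w\|\lambda(dw)<\infty$ and $C_W:=\sup_{w\in W}\|\partial w/\partial y\|<\infty$, where $\partial w/\partial y$ denotes the derivative of $w$ in its first (spatial) variable. Let $\mu_0(dw\times dz)=\sigma(w,z)\lambda(dw)dz$ be a probability measure on $W\times[0,1]$ with $\int_W\sigma(w,y)\lambda(dw)=1$ for all $y\in[0,1]$ and $\int_0^1\sigma(w,z)dz=1$ for all $w$. Put $\Gamma_b=\{(0,s):0\le s\le T\}$, $\Gamma_i=\{(z,0):0\le z\le1\}$, $\Gamma=\Gamma_b\cup\Gamma_i$, $\Gamma_t=\Gamma_i\cup\{(0,s):0\le s\le t\}$ and $\Delta_T=\{(\gamma,t)\in\Gamma\times[0,T]:\gamma\in\Gamma_t\}$. *)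

theory Defs
  imports "HOL-Probability.Probability"
begin

text \<open>Elements w of W are functions w(y,t) on the rectangle [0,1] x [0,T], encoded as
  curried real functions  w y t  that vanish outside the rectangle (extensional encoding).\<close>

type_synonym fn = "real \<Rightarrow> real \<Rightarrow> real"

definition rect :: "real \<Rightarrow> (real \<times> real) set" where
  "rect T = {0..1} \<times> {0..T}"

definition C1_rect :: "real \<Rightarrow> fn \<Rightarrow> bool" where
  "C1_rect T w \<longleftrightarrow>
     (\<forall>y t. (y, t) \<notin> rect T \<longrightarrow> w y t = 0) \<and>
     (\<exists>D. (\<forall>p\<in>rect T. ((\<lambda>q. w (fst q) (snd q)) has_derivative D p) (at p within rect T)) \<and>
          continuous_on (rect T) (\<lambda>p. D p (1, 0)) \<and>
          continuous_on (rect T) (\<lambda>p. D p (0, 1)))"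

definition dwdy :: "fn \<Rightarrow> real \<Rightarrow> real \<Rightarrow> real" where
  "dwdy w x s = vector_derivative (\<lambda>y. w y s) (at x within {0..1})"

definition supnorm :: "real \<Rightarrow> fn \<Rightarrow> real" where
  "supnorm T w = (SUP p\<in>rect T. \<bar>w (fst p) (snd p)\<bar>)"

definition supdist :: "real \<Rightarrow> fn \<Rightarrow> fn \<Rightarrow> real" where
  "supdist T w v = (SUP p\<in>rect T. \<bar>w (fst p) (snd p) - v (fst p) (snd p)\<bar>)"

definition borel_sup :: "real \<Rightarrow> fn set \<Rightarrow> fn measure" where
  "borel_sup T W = sigma W {U. U \<subseteq> W \<and> (\<forall>w\<in>U. \<exists>e>0. \<forall>v\<in>W. supdist T w v < e \<longrightarrow> v \<in> U)}"

definition MW :: "real \<Rightarrow> fn measure \<Rightarrow> real" where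
  "MW T lam = (\<integral>w. supnorm T w \<partial>lam)"

definition CW_set :: "real \<Rightarrow> fn set \<Rightarrow> real set" where
  "CW_set T W = {\<bar>dwdy w x s\<bar> | w x s. w \<in> W \<and> x \<in> {0..1} \<and> s \<in> {0..T}}"

definition CW :: "real \<Rightarrow> fn set \<Rightarrow> real" where
  "CW T W = Sup (CW_set T W)"

definition I01 :: "real measure" where
  "I01 = restrict_space lborel {0..1}"

definition Gamma_b :: "real \<Rightarrow> (real \<times> real) set" where
  "Gamma_b T = {(0, s) | s. 0 \<le> s \<and> s \<le> T}"

definition Gamma_i :: "(real \<times> real) set" where
  "Gamma_i = {(z, 0) | z. 0 \<le> z \<and> z \<le> 1}"

definition Gamma :: "real \<Rightarrow> (real \<times> real) set" where
  "Gamma T = Gamma_b T \<union> Gamma_i"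

definition Gamma_t :: "real \<Rightarrow> (real \<times> real) set" where
  "Gamma_t t = Gamma_i \<union> {(0, s) | s. 0 \<le> s \<and> s \<le> t}"

definition Delta :: "real \<Rightarrow> ((real \<times> real) \<times> real) set" where
  "Delta T = {(\<gamma>, t). \<gamma> \<in> Gamma T \<and> t \<in> {0..T} \<and> \<gamma> \<in> Gamma_t t}"

definition Omega :: "fn \<Rightarrow> real \<Rightarrow> real \<Rightarrow> real" where
  "Omega w s t = (\<integral>u\<in>{s..t}. w 1 u \<partial>lborel)"

end

theory Submission
  imports Defs
begin

text \<open>
  Along the characteristic \<open>a = yC (y0, t0)\<close>, the balance equation says that for every
  bounded measurable \<open>g\<close> on \<open>W\<close> the tail integral
  \<open>N t g = \<integral>\<^bsub>W \<times> [a t, 1)\<^esub> g(w) \<mu>\<^sub>t(dw dz)\<close> has derivative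
  \<open>- \<integral>\<^bsub>W \<times> [a t, 1)\<^esub> g(w) w(z, t) \<mu>\<^sub>t(dw dz)\<close>. The equation is only assumed for
  indicators of measurable sets; it extends to bounded \<open>g\<close> through simple functions, using the
  Lipschitz hypothesis (3) and dominated convergence for the continuity of everything in \<open>(t, y)\<close>.
  Writing \<open>w(z, t) = w(1, t) - \<integral>\<^bsub>z\<^esub>\<^sup>1 \<partial>w/\<partial>y(x, t) dx\<close> and using Fubini, the loss term
  becomes a decay at rate \<open>w(1, t)\<close> plus a gradient term. For the time-dependent weight
  \<open>1\<^sub>B(w) exp(-\<Omega>\<^sub>w(r, t))\<close> the product rule makes the decay terms cancel, so the derivative
  in \<open>r\<close> is the gradient term alone, and integrating over \<open>[t0, t]\<close> gives the formula.
\<close>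

lemma compact_rect: "compact (rect T)"
  unfolding rect_def by (intro compact_Times compact_Icc)

lemma rect_nonempty: "T \<ge> 0 \<Longrightarrow> (0, 0) \<in> rect T"
  unfolding rect_def by auto

lemma C1_rect_zero_outside: "C1_rect T w \<Longrightarrow> (y, t) \<notin> rect T \<Longrightarrow> w y t = 0"
  unfolding C1_rect_def by auto

lemma C1_rect_continuous_on:
  "C1_rect T w \<Longrightarrow> continuous_on (rect T) (\<lambda>q. w (fst q) (snd q))"
  unfolding C1_rect_def by (auto intro: has_derivative_continuous_on)

lemma continuous_on_rect_slices:
  assumes f: "continuous_on (rect T) (\<lambda>q. f (fst q) (snd q))"
  shows "s \<in> {0..T} \<Longrightarrow> continuous_on {0..1} (\<lambda>y. f y s)"
    and "y \<in> {0..1} \<Longrightarrow> continuous_on {0..T} (\<lambda>u. f y u)"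
proof -
  show "continuous_on {0..1} (\<lambda>y. f y s)" if "s \<in> {0..T}"
    using that
    by (intro continuous_on_compose2[OF f, where f="\<lambda>y. (y, s)", simplified])
       (auto intro!: continuous_intros simp: rect_def)
  show "continuous_on {0..T} (\<lambda>u. f y u)" if "y \<in> {0..1}"
    using that
    by (intro continuous_on_compose2[OF f, where f="\<lambda>u. (y, u)", simplified])
       (auto intro!: continuous_intros simp: rect_def)
qed

lemma bdd_above_abs_rect:
  fixes f :: "real \<times> real \<Rightarrow> real"
  assumes "continuous_on (rect T) f"
  shows "bdd_above ((\<lambda>p. \<bar>f p\<bar>) ` rect T)"
proof -
  have "compact ((\<lambda>p. \<bar>f p\<bar>) ` rect T)"
    by (intro compact_continuous_image continuous_intros assms compact_rect)
  then show ?thesis by (intro bounded_imp_bdd_above compact_imp_bounded)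
qed

lemma abs_diff_le_supdist:
  assumes w: "C1_rect T w" and v: "C1_rect T v" and T: "T \<ge> 0"
  shows "\<bar>w y s - v y s\<bar> \<le> supdist T w v"
proof -
  have bdd: "bdd_above ((\<lambda>p. \<bar>w (fst p) (snd p) - v (fst p) (snd p)\<bar>) ` rect T)"
    by (intro bdd_above_abs_rect continuous_intros C1_rect_continuous_on w v)
  then have le: "\<bar>w y s - v y s\<bar> \<le> supdist T w v" if "(y, s) \<in> rect T" for y s
    unfolding supdist_def using that by (metis (no_types, lifting) cSUP_upper fst_conv snd_conv)
  show ?thesis
  proof (cases "(y, s) \<in> rect T")
    case False
    then show ?thesis
      using le[OF rect_nonempty[OF T]] C1_rect_zero_outside[OF w] C1_rect_zero_outside[OF v] by simp
  qed (rule le)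
qed

lemma abs_le_supnorm:
  assumes "C1_rect T w" "T \<ge> 0"
  shows "\<bar>w y s\<bar> \<le> supnorm T w"
proof -
  have "C1_rect T (\<lambda>_ _. 0)"
    unfolding C1_rect_def by (auto intro!: exI[of _ "\<lambda>_ _. 0"] derivative_eq_intros)
  from abs_diff_le_supdist[OF assms(1) this assms(2)] show ?thesis
    by (simp add: supdist_def supnorm_def)
qed

lemma supnorm_nonneg: "C1_rect T w \<Longrightarrow> T \<ge> 0 \<Longrightarrow> supnorm T w \<ge> 0"
  using abs_le_supnorm abs_ge_zero order_trans by blast

lemma C1_rect_dwdy:
  assumes w: "C1_rect T w" and xs: "(x, s) \<in> rect T"
  shows "((\<lambda>y. w y s) has_vector_derivative dwdy w x s) (at x within {0..1})"
    and "continuous_on (rect T) (\<lambda>q. dwdy w (fst q) (snd q))"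
proof -
  from w obtain D where D: "\<forall>p\<in>rect T. ((\<lambda>q. w (fst q) (snd q)) has_derivative D p) (at p within rect T)"
    and Dc: "continuous_on (rect T) (\<lambda>p. D p (1, 0))" unfolding C1_rect_def by blast
  have partial: "((\<lambda>y. w y s) has_vector_derivative D (x, s) (1, 0)) (at x within {0..1})"
    if xs: "(x, s) \<in> rect T" for x s
  proof -
    have lin: "linear (D (x, s))" using D xs has_derivative_linear by blast
    have g: "((\<lambda>y. (y, s)) has_derivative (\<lambda>h. (h, 0))) (at x within {0..1})"
      by (auto intro!: derivative_eq_intros)
    have sub: "(\<lambda>y. (y, s)) ` {0..1} \<subseteq> rect T" using xs unfolding rect_def by auto
    have f: "((\<lambda>q. w (fst q) (snd q)) has_derivative D (x, s))
        (at ((\<lambda>y. (y, s)) x) within (\<lambda>y. (y, s)) ` {0..1})"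
      using has_derivative_subset[OF _ sub] D xs by (metis (no_types, lifting))
    have "D (x, s) \<circ> (\<lambda>h. (h, 0)) = (\<lambda>h. h *\<^sub>R D (x, s) (1, 0))"
    proof
      fix h :: real
      have "(h, 0 :: real) = h *\<^sub>R (1, 0)" by simp
      then show "(D (x, s) \<circ> (\<lambda>h. (h, 0))) h = h *\<^sub>R D (x, s) (1, 0)"
        using linear_scale[OF lin] by (metis comp_apply)
    qed
    with diff_chain_within[OF g f] show ?thesis
      unfolding has_vector_derivative_def comp_def by simp
  qed
  have eq: "dwdy w x s = D (x, s) (1, 0)" if xs: "(x, s) \<in> rect T" for x s
  proof -
    have "x \<in> cbox 0 1" using xs unfolding rect_def by auto
    then show ?thesis
      using vector_derivative_within_cbox[of 0 1 x "\<lambda>y. w y s"] partial[OF xs]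
      unfolding dwdy_def by simp
  qed
  show "((\<lambda>y. w y s) has_vector_derivative dwdy w x s) (at x within {0..1})"
    using partial[OF xs] eq[OF xs] by simp
  show "continuous_on (rect T) (\<lambda>q. dwdy w (fst q) (snd q))"
    using Dc by (rule continuous_on_eq) (simp add: eq)
qed

lemma abs_dwdy_le_CW:
  assumes "bdd_above (CW_set T W)" "w \<in> W" "x \<in> {0..1}" "s \<in> {0..T}"
  shows "\<bar>dwdy w x s\<bar> \<le> CW T W"
  unfolding CW_def using assms by (auto intro!: cSup_upper simp: CW_set_def)

lemma abs_integral_le_bound:
  fixes f :: "real \<Rightarrow> real"
  assumes "f integrable_on {a..b}" "\<And>u. u \<in> {a..b} \<Longrightarrow> \<bar>f u\<bar> \<le> C" "a \<le> b"
  shows "\<bar>integral {a..b} f\<bar> \<le> C * (b - a)"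
proof -
  have "0 \<le> C" using assms(2)[of a] assms(3) by force
  with assms show ?thesis
    using has_integral_bound_real[of C "{}" f "integral {a..b} f" a b] by auto
qed

lemma integral_excess_tendsto_0:
  fixes G :: "'a \<Rightarrow> real"
  assumes G: "integrable M G"
  shows "(\<lambda>m. \<integral>w. max 0 (G w - real m) \<partial>M) \<longlonglongrightarrow> 0"
proof -
  have "(\<lambda>m. \<integral>w. max 0 (G w - real m) \<partial>M) \<longlonglongrightarrow> (\<integral>w. 0 \<partial>M)"
  proof (rule integral_dominated_convergence[where w="\<lambda>w. \<bar>G w\<bar>"])
    show "(\<lambda>w. 0::real) \<in> borel_measurable M" by simp
    show "(\<lambda>w. max 0 (G w - real i)) \<in> borel_measurable M" for i using G by measurable
    show "integrable M (\<lambda>w. \<bar>G w\<bar>)" using G by simp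
    show "AE w in M. (\<lambda>i. max 0 (G w - real i)) \<longlonglongrightarrow> 0"
    proof (rule AE_I2)
      fix w
      obtain N :: nat where "G w < real N" using reals_Archimedean2 by blast
      then have "\<forall>n\<ge>N. max 0 (G w - real n) = 0" by auto
      then show "(\<lambda>i. max 0 (G w - real i)) \<longlonglongrightarrow> 0"
        by (intro tendsto_eventually) (auto simp: eventually_sequentially)
    qed
    show "AE w in M. norm (max 0 (G w - real i)) \<le> \<bar>G w\<bar>" for i
      by (intro AE_I2) auto
  qed
  then show ?thesis by simp
qed

lemma exp_neg_lipschitz:
  fixes A B :: real
  assumes "0 \<le> A" "0 \<le> B"
  shows "\<bar>exp (- A) - exp (- B)\<bar> \<le> \<bar>A - B\<bar>"
proof -
  have ordered: "\<bar>exp (- a) - exp (- b)\<bar> \<le> b - a" if "0 \<le> a" "a \<le> b" for a b :: real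
  proof -
    have "exp (- a) - exp (- b) = exp (- a) * (1 - exp (- (b - a)))"
      by (simp add: algebra_simps flip: exp_add)
    also have "\<dots> \<le> 1 * (b - a)"
      using that exp_ge_add_one_self[of "a - b"] by (intro mult_mono) (auto simp: algebra_simps)
    finally show ?thesis using that by simp
  qed
  show ?thesis
    using ordered[of A B] ordered[of B A] assms by (cases "A \<le> B") (auto simp: abs_minus_commute)
qed
definition right_approach :: "real \<Rightarrow> nat \<Rightarrow> real" where
  "right_approach x i = x + (1 - x) / real (Suc i)"

lemma right_approach_tendsto: "right_approach x \<longlonglongrightarrow> x"
proof -
  have "(\<lambda>i. x + (1 - x) * inverse (real (Suc i))) \<longlonglongrightarrow> x + (1 - x) * 0"
    by (intro tendsto_intros LIMSEQ_inverse_real_of_nat)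
  then show ?thesis unfolding right_approach_def by (simp add: divide_inverse)
qed

lemma right_approach_in:
  assumes "0 \<le> x" "x < 1"
  shows "right_approach x i \<in> {0..1} - {x}"
proof -
  have "(1 - x) / real (Suc i) \<le> 1 - x" "0 < (1 - x) / real (Suc i)"
    using assms by (auto simp: divide_le_eq)
  then show ?thesis unfolding right_approach_def using assms by auto
qed

definition floor_grid :: "nat \<Rightarrow> real \<Rightarrow> real" where
  "floor_grid n y = real_of_int \<lfloor>real (Suc n) * y\<rfloor> / real (Suc n)"

lemma floor_grid_le: "floor_grid n y \<le> y"
  unfolding floor_grid_def by (simp add: divide_le_eq mult.commute)

lemma floor_grid_gt: "y - 1 / real (Suc n) < floor_grid n y"
proof -
  have "real (Suc n) * y - 1 < real_of_int \<lfloor>real (Suc n) * y\<rfloor>" by linarith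
  then have "(real (Suc n) * y - 1) / real (Suc n) < floor_grid n y"
    unfolding floor_grid_def by (intro divide_strict_right_mono) auto
  then show ?thesis by (simp add: field_simps)
qed

lemma floor_grid_nonneg: "0 \<le> y \<Longrightarrow> 0 \<le> floor_grid n y"
  unfolding floor_grid_def by simp

lemma floor_grid_tendsto: "(\<lambda>n. floor_grid n y) \<longlonglongrightarrow> y"
proof (rule tendsto_sandwich[of "\<lambda>n. y - 1 / real (Suc n)" _ _ "\<lambda>n. y"])
  show "\<forall>\<^sub>F n in sequentially. y - 1 / real (Suc n) \<le> floor_grid n y"
    using floor_grid_gt by (intro always_eventually allI less_imp_le)
  have "(\<lambda>n. y - 1 / real (Suc n)) \<longlonglongrightarrow> y - 0"
    by (intro tendsto_intros LIMSEQ_inverse_real_of_nat[unfolded inverse_eq_divide])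
  then show "(\<lambda>n. y - 1 / real (Suc n)) \<longlonglongrightarrow> y" by simp
qed (auto simp: floor_grid_le)

lemma measurable_floor_grid_eval:
  assumes "\<And>k. (\<lambda>p. f p (real_of_int k / real (Suc n))) \<in> borel_measurable M"
    and "g \<in> borel_measurable M"
  shows "(\<lambda>p. f p (floor_grid n (g p))) \<in> borel_measurable M"
proof -
  have "(\<lambda>p. \<lfloor>real (Suc n) * g p\<rfloor>) \<in> measurable M (count_space UNIV)"
    by (rule measurable_compose[OF _ measurable_real_floor]) (use assms(2) in measurable)
  from measurable_compose_countable[OF assms(1) this] show ?thesis
    unfolding floor_grid_def .
qed

locale flow_measures =
  fixes T :: real and W :: "fn set" and lam :: "fn measure" and mu :: "real \<Rightarrow> (fn \<times> real) measure"
  assumes T_pos: "T > 0"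
    and W_C1: "\<forall>w\<in>W. C1_rect T w"
    and W_nonneg: "\<forall>w\<in>W. \<forall>y\<in>{0..1}. \<forall>t\<in>{0..T}. w y t \<ge> 0"
    and lam_space: "space lam = W"
    and lam_sets: "sets lam = sets (borel_sup T W)"
    and lam_prob: "prob_space lam"
    and MW_fin: "integrable lam (supnorm T)"
    and CW_fin: "bdd_above (CW_set T W)"
    and mu_sets: "\<forall>t\<in>{0..T}. sets (mu t) = sets (lam \<Otimes>\<^sub>M I01)"
    and mu_prob: "\<forall>t\<in>{0..T}. prob_space (mu t)"
    and mu_marg: "\<forall>t\<in>{0..T}. \<forall>B\<in>sets lam. measure (mu t) (B \<times> {0..<1}) = measure lam B"
    and mu_tail: "\<forall>t\<in>{0..T}. \<forall>y\<in>{0..1}. measure (mu t) (W \<times> {y..<1}) = 1 - y"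
    and lip: "\<forall>h. h \<in> borel_measurable lam \<and> (\<forall>w\<in>W. \<bar>h w\<bar> \<le> 1) \<longrightarrow>
               (\<forall>y\<in>{0..1}. \<forall>t\<in>{0..T}. \<forall>y'\<in>{0..1}. \<forall>t'\<in>{0..T}.
                  \<bar>(\<integral>p\<in>W \<times> {y'..<1}. h (fst p) \<partial>mu t') - (\<integral>p\<in>W \<times> {y..<1}. h (fst p) \<partial>mu t)\<bar>
                    \<le> \<bar>y' - y\<bar> + MW T lam * exp (2 * CW T W * T) * \<bar>t' - t\<bar>)"
begin

lemma W_C1_rect: "w \<in> W \<Longrightarrow> C1_rect T w"
  using W_C1 by auto

lemma W_abs_le_supnorm: "w \<in> W \<Longrightarrow> \<bar>w y s\<bar> \<le> supnorm T w"
  using abs_le_supnorm W_C1_rect T_pos by simp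

lemma W_supnorm_nonneg: "w \<in> W \<Longrightarrow> supnorm T w \<ge> 0"
  using supnorm_nonneg W_C1_rect T_pos by simp

lemma W_abs_diff_le_supdist:
  "w \<in> W \<Longrightarrow> v \<in> W \<Longrightarrow> \<bar>w y s - v y s\<bar> \<le> supdist T w v"
  using abs_diff_le_supdist W_C1_rect T_pos by simp

lemma W_nonempty: "W \<noteq> {}"
  using prob_space.not_empty[OF lam_prob] lam_space by simp

lemma sets_W: "W \<in> sets lam"
  using lam_space sets.top by metis

lemma CW_nonneg: "CW T W \<ge> 0"
proof -
  obtain w where w: "w \<in> W" using W_nonempty by auto
  show ?thesis using abs_dwdy_le_CW[OF CW_fin w, of 0 0] T_pos by auto
qed

lemma continuous_on_time:
  "w \<in> W \<Longrightarrow> y \<in> {0..1} \<Longrightarrow> continuous_on {0..T} (\<lambda>u. w y u)"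
  by (rule continuous_on_rect_slices(2)[OF C1_rect_continuous_on[OF W_C1_rect]])

lemma continuous_on_space:
  "w \<in> W \<Longrightarrow> s \<in> {0..T} \<Longrightarrow> continuous_on {0..1} (\<lambda>y. w y s)"
  by (rule continuous_on_rect_slices(1)[OF C1_rect_continuous_on[OF W_C1_rect]])

lemma continuous_on_dwdy_space:
  "w \<in> W \<Longrightarrow> s \<in> {0..T} \<Longrightarrow> continuous_on {0..1} (\<lambda>x. dwdy w x s)"
  using continuous_on_rect_slices(1)[OF C1_rect_dwdy(2)[OF W_C1_rect, of _ 0 s]] T_pos
  by (simp add: rect_def)

lemma continuous_on_dwdy_time:
  "w \<in> W \<Longrightarrow> x \<in> {0..1} \<Longrightarrow> continuous_on {0..T} (\<lambda>s. dwdy w x s)"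
  using continuous_on_rect_slices(2)[OF C1_rect_dwdy(2)[OF W_C1_rect, of _ x 0]] T_pos
  by (simp add: rect_def)

lemma measurable_if_supdist_continuous:
  fixes g :: "fn \<Rightarrow> real"
  assumes "\<forall>w\<in>W. \<forall>e>0. \<exists>d>0. \<forall>v\<in>W. supdist T w v < d \<longrightarrow> \<bar>g v - g w\<bar> < e"
  shows "g \<in> borel_measurable lam"
proof (rule borel_measurableI)
  fix S :: "real set" assume S: "open S"
  have "\<exists>d>0. \<forall>v\<in>W. supdist T w v < d \<longrightarrow> v \<in> g -` S \<inter> W" if w: "w \<in> W" "g w \<in> S" for w
  proof -
    obtain e where e: "e > 0" "\<forall>y. dist y (g w) < e \<longrightarrow> y \<in> S"
      using S w unfolding open_dist by blast
    obtain d where "d > 0" "\<forall>v\<in>W. supdist T w v < d \<longrightarrow> \<bar>g v - g w\<bar> < e"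
      using assms w e by blast
    then show ?thesis using e by (auto simp: dist_real_def)
  qed
  then have "g -` S \<inter> W \<in> sets (borel_sup T W)"
    unfolding borel_sup_def by (subst sets_measure_of) (auto intro: sigma_sets.Basic)
  then show "g -` S \<inter> space lam \<in> sets lam" using lam_sets lam_space by simp
qed

lemma measurable_eval: "(\<lambda>w. w y s) \<in> borel_measurable lam"
  by (rule measurable_if_supdist_continuous)
     (metis W_abs_diff_le_supdist abs_minus_commute le_less_trans)

lemma eval_floor_grid_tendsto:
  assumes w: "w \<in> W" and s: "s \<in> {0..T}"
  shows "(\<lambda>n. w (floor_grid n y) s) \<longlonglongrightarrow> w y s"
proof -
  consider "y < 0" | "y \<in> {0..1}" | "1 < y" by fastforce
  then show ?thesis
  proof cases
    case 1
    then have "w (floor_grid n y) s = 0" "w y s = 0" for n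
      using floor_grid_le[of n y] C1_rect_zero_outside[OF W_C1_rect[OF w]] unfolding rect_def by auto
    then show ?thesis by simp
  next
    case 2
    then have "floor_grid n y \<in> {0..1}" for n
      using floor_grid_nonneg floor_grid_le order_trans by fastforce
    with 2 show ?thesis
      by (intro continuous_on_tendsto_compose[OF continuous_on_space[OF w s] floor_grid_tendsto]) auto
  next
    case 3
    have "\<forall>\<^sub>F n in sequentially. 1 < floor_grid n y"
      by (rule order_tendstoD(1)[OF floor_grid_tendsto 3])
    then have "\<forall>\<^sub>F n in sequentially. w (floor_grid n y) s = w y s"
      by eventually_elim (use 3 C1_rect_zero_outside[OF W_C1_rect[OF w]] in \<open>auto simp: rect_def\<close>)
    then show ?thesis by (rule tendsto_eventually)
  qed
qed

text \<open>\<open>(w, y) \<mapsto> w y s\<close> is the pointwise limit of \<open>(w, y) \<mapsto> w (floor_grid n y) s\<close>, whose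
  dependence on \<open>y\<close> factors through the countable set of grid points.\<close>

lemma measurable_eval_pair:
  "(\<lambda>p. fst p (snd p) s) \<in> borel_measurable (lam \<Otimes>\<^sub>M (lborel :: real measure))"
proof (cases "s \<in> {0..T}")
  case False
  have "(\<lambda>p. 0::real) \<in> borel_measurable (lam \<Otimes>\<^sub>M (lborel :: real measure))" by simp
  then show ?thesis
  proof (rule measurable_cong[THEN iffD1, rotated])
    fix p assume "p \<in> space (lam \<Otimes>\<^sub>M (lborel :: real measure))"
    then have "fst p \<in> W" using lam_space by (auto simp: space_pair_measure)
    then show "0 = fst p (snd p) s"
      using C1_rect_zero_outside[OF W_C1_rect] False unfolding rect_def by auto
  qed
next
  case True
  show ?thesis
  proof (rule borel_measurable_LIMSEQ_real)
    show "(\<lambda>p. fst p (floor_grid n (snd p)) s) \<in> borel_measurable (lam \<Otimes>\<^sub>M lborel)" for n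
      by (rule measurable_floor_grid_eval[where f="\<lambda>p y. fst p y s"])
         (auto intro: measurable_compose[OF measurable_fst measurable_eval])
    show "(\<lambda>n. fst p (floor_grid n (snd p)) s) \<longlonglongrightarrow> fst p (snd p) s"
      if "p \<in> space (lam \<Otimes>\<^sub>M lborel)" for p
      using that True lam_space by (intro eval_floor_grid_tendsto) (auto simp: space_pair_measure)
  qed
qed

lemma measurable_eval_comp:
  assumes "f \<in> measurable M lam" "g \<in> borel_measurable M"
  shows "(\<lambda>x. f x (g x) s) \<in> borel_measurable M"
proof -
  have "(\<lambda>x. (f x, g x)) \<in> measurable M (lam \<Otimes>\<^sub>M (lborel :: real measure))"
    using assms by (intro measurable_Pair) (auto simp: measurable_lborel2)
  from measurable_compose[OF this measurable_eval_pair] show ?thesis by simp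
qed

lemma difference_quotient_tendsto_dwdy:
  assumes w: "w \<in> W" and x: "0 \<le> x" "x < 1" and s: "s \<in> {0..T}"
  shows "(\<lambda>i. (w (right_approach x i) s - w x s) / (right_approach x i - x)) \<longlonglongrightarrow> dwdy w x s"
proof -
  have "(x, s) \<in> rect T" using x s unfolding rect_def by auto
  then have "((\<lambda>y. w y s) has_field_derivative dwdy w x s) (at x within {0..1})"
    using C1_rect_dwdy(1)[OF W_C1_rect[OF w]] by (simp add: has_real_derivative_iff_has_vector_derivative)
  then have "((\<lambda>z. (w z s - w x s) / (z - x)) \<longlongrightarrow> dwdy w x s) (at x within {0..1})"
    by (simp add: has_field_derivative_iff)
  then show ?thesis
    using right_approach_in[OF x] right_approach_tendsto
    unfolding tendsto_at_iff_sequentially comp_def by blast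
qed

lemma measurable_dwdy_comp:
  assumes f: "f \<in> measurable M lam" and g: "g \<in> borel_measurable M" and s: "s \<in> {0..T}"
  shows "(\<lambda>x. indicator {0..<1} (g x) * dwdy (f x) (g x) s) \<in> borel_measurable M"
proof (rule borel_measurable_LIMSEQ_real)
  let ?dq = "\<lambda>i x. (f x (right_approach (g x) i) s - f x (g x) s) / (right_approach (g x) i - g x)"
  show "(\<lambda>x. indicator {0..<1} (g x) * ?dq i x) \<in> borel_measurable M" for i
  proof -
    have g': "(\<lambda>x. right_approach (g x) i) \<in> borel_measurable M"
      unfolding right_approach_def using g by measurable
    show ?thesis
      using measurable_eval_comp[OF f g'] measurable_eval_comp[OF f g] g g' by measurable
  qed
  show "(\<lambda>i. indicator {0..<1} (g x) * ?dq i x) \<longlonglongrightarrow> indicator {0..<1} (g x) * dwdy (f x) (g x) s"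
    if x: "x \<in> space M" for x
  proof (cases "g x \<in> {0..<1}")
    case True
    have "f x \<in> W" using measurable_space[OF f x] lam_space by simp
    then show ?thesis using True by (intro tendsto_intros difference_quotient_tendsto_dwdy s) auto
  qed simp
qed

lemma measurable_dwdy:
  assumes "x \<in> {0..<1}" "s \<in> {0..T}"
  shows "(\<lambda>w. dwdy w x s) \<in> borel_measurable lam"
  using measurable_dwdy_comp[OF measurable_ident_sets[OF refl] borel_measurable_const assms(2), of x] assms(1)
  by simp

lemma Omega_eq_integral:
  assumes "w \<in> W" "0 \<le> s" "t \<le> T"
  shows "Omega w s t = integral {s..t} (\<lambda>u. w 1 u)"
    and "set_integrable lborel {s..t} (\<lambda>u. w 1 u)"
proof -
  have c: "continuous_on {s..t} (\<lambda>u. w 1 u)"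
    by (rule continuous_on_subset[OF continuous_on_time[OF assms(1)]]) (use assms in auto)
  show si: "set_integrable lborel {s..t} (\<lambda>u. w 1 u)"
    unfolding set_integrable_def by (rule borel_integrable_compact[OF compact_Icc c])
  show "Omega w s t = integral {s..t} (\<lambda>u. w 1 u)"
    unfolding Omega_def by (rule set_borel_integral_eq_integral(2)[OF si])
qed

lemma rate_at_1_integrable_on:
  "w \<in> W \<Longrightarrow> 0 \<le> a \<Longrightarrow> b \<le> T \<Longrightarrow> (\<lambda>u. w 1 u) integrable_on {a..b}"
  using Omega_eq_integral(2) set_borel_integral_eq_integral(1) by blast

lemma abs_Omega_diff_le:
  assumes v: "v \<in> W" and w: "w \<in> W" and st: "0 \<le> s" "t \<le> T"
  shows "\<bar>Omega v s t - Omega w s t\<bar> \<le> supdist T w v * T"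
proof (cases "s \<le> t")
  case True
  have "Omega v s t - Omega w s t = integral {s..t} (\<lambda>u. v 1 u - w 1 u)"
    using Omega_eq_integral[OF v st] Omega_eq_integral[OF w st] rate_at_1_integrable_on[OF v st]
      rate_at_1_integrable_on[OF w st] by (simp add: integral_diff)
  also have "\<bar>\<dots>\<bar> \<le> supdist T w v * (t - s)"
    using rate_at_1_integrable_on[OF v st] rate_at_1_integrable_on[OF w st] True
    by (intro abs_integral_le_bound integrable_diff)
       (metis W_abs_diff_le_supdist[OF w v] abs_minus_commute)+
  also have "\<dots> \<le> supdist T w v * T"
    using W_abs_diff_le_supdist[OF w v, of 0 0] st by (intro mult_left_mono) auto
  finally show ?thesis .
next
  case False
  then show ?thesis
    using W_abs_diff_le_supdist[OF w v, of 0 0] T_pos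
    by (simp add: Omega_eq_integral[OF v st] Omega_eq_integral[OF w st])
qed

lemma measurable_Omega:
  assumes "0 \<le> s" "t \<le> T"
  shows "(\<lambda>w. Omega w s t) \<in> borel_measurable lam"
proof (rule measurable_if_supdist_continuous, intro ballI allI impI)
  fix w :: fn and e :: real assume w: "w \<in> W" and e: "e > 0"
  show "\<exists>d>0. \<forall>v\<in>W. supdist T w v < d \<longrightarrow> \<bar>Omega v s t - Omega w s t\<bar> < e"
  proof (intro exI[of _ "e / T"] conjI ballI impI)
    fix v assume v: "v \<in> W" and d: "supdist T w v < e / T"
    have "\<bar>Omega v s t - Omega w s t\<bar> \<le> supdist T w v * T"
      by (rule abs_Omega_diff_le[OF v w assms])
    also have "\<dots> < e" using d T_pos by (simp add: field_simps)
    finally show "\<bar>Omega v s t - Omega w s t\<bar> < e" .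
  qed (use e T_pos in simp)
qed

lemma Omega_split:
  assumes w: "w \<in> W" and r: "0 \<le> r" "r \<le> t1" and t1: "t1 \<le> T"
  shows "Omega w r t1 = integral {0..t1} (\<lambda>u. w 1 u) - integral {0..r} (\<lambda>u. w 1 u)"
  using Henstock_Kurzweil_Integration.integral_combine[OF r rate_at_1_integrable_on[OF w order_refl t1]]
    Omega_eq_integral(1)[OF w r(1) t1] by simp

lemma Omega_nonneg:
  assumes w: "w \<in> W" and r: "0 \<le> r" and t1: "t1 \<le> T"
  shows "0 \<le> Omega w r t1"
  unfolding Omega_eq_integral(1)[OF w r t1]
  by (rule integral_nonneg[OF rate_at_1_integrable_on[OF w r t1]]) (use W_nonneg w r t1 in auto)

lemma Omega_refl:
  "w \<in> W \<Longrightarrow> 0 \<le> r \<Longrightarrow> r \<le> T \<Longrightarrow> Omega w r r = 0"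
  by (simp add: Omega_eq_integral(1))

lemma Omega_lipschitz:
  assumes w: "w \<in> W" and r: "0 \<le> r" "r \<le> t1" and r': "0 \<le> r'" "r' \<le> t1" and t1: "t1 \<le> T"
  shows "\<bar>Omega w r' t1 - Omega w r t1\<bar> \<le> supnorm T w * \<bar>r' - r\<bar>"
proof -
  have main: "\<bar>Omega w b t1 - Omega w a t1\<bar> \<le> supnorm T w * (b - a)"
    if ab: "0 \<le> a" "a \<le> b" "b \<le> t1" for a b
  proof -
    have "Omega w a t1 - Omega w b t1 = integral {a..b} (\<lambda>u. w 1 u)"
      using Omega_split[OF w _ _ t1, of a] Omega_split[OF w _ _ t1, of b] ab t1
        Henstock_Kurzweil_Integration.integral_combine[OF ab(1,2) rate_at_1_integrable_on[OF w order_refl, of b]]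
      by simp
    moreover have "\<bar>integral {a..b} (\<lambda>u. w 1 u)\<bar> \<le> supnorm T w * (b - a)"
      using ab t1 by (intro abs_integral_le_bound rate_at_1_integrable_on[OF w] W_abs_le_supnorm[OF w]) auto
    ultimately show ?thesis by (simp add: abs_minus_commute)
  qed
  show ?thesis
    using main[of r r'] main[of r' r] r r' by (cases "r \<le> r'") (auto simp: abs_minus_commute)
qed

lemma Omega_has_derivative:
  assumes w: "w \<in> W" and ta: "0 \<le> ta" and r: "r \<in> {ta..t1}" and t1: "t1 \<le> T"
  shows "((\<lambda>r. Omega w r t1) has_real_derivative (- w 1 r)) (at r within {ta..t1})"
proof -
  have "((\<lambda>x. integral {0..x} (\<lambda>u. w 1 u)) has_vector_derivative w 1 r) (at r within {0..T})"
    using r ta t1 by (intro integral_has_vector_derivative continuous_on_time[OF w]) auto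
  then have "((\<lambda>x. integral {0..x} (\<lambda>u. w 1 u)) has_real_derivative w 1 r) (at r within {ta..t1})"
    by (simp add: has_real_derivative_iff_has_vector_derivative)
       (rule has_vector_derivative_within_subset, use ta t1 in auto)
  then have "((\<lambda>x. integral {0..t1} (\<lambda>u. w 1 u) - integral {0..x} (\<lambda>u. w 1 u))
      has_real_derivative (- w 1 r)) (at r within {ta..t1})"
    by (auto intro!: derivative_eq_intros)
  then show ?thesis
    by (rule has_field_derivative_transform_within[OF _ zero_less_one r])
       (use Omega_split[OF w _ _ t1] ta in auto)
qed

lemma I01_space: "space I01 = {0..1}"
  unfolding I01_def by (simp add: space_restrict_space)

lemma I01_sets: "S \<in> sets borel \<Longrightarrow> S \<subseteq> {0..1} \<Longrightarrow> S \<in> sets I01"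
  unfolding I01_def by (subst sets_restrict_space_iff) auto

lemma measurable_I01_id: "(\<lambda>z. z) \<in> borel_measurable I01"
  unfolding I01_def by (rule measurable_restrict_space1) simp

lemma measurable_snd_I01: "(\<lambda>p. snd p) \<in> borel_measurable (lam \<Otimes>\<^sub>M I01)"
  by (rule measurable_compose[OF measurable_snd measurable_I01_id])

lemma space_pair_lam_I01: "space (lam \<Otimes>\<^sub>M I01) = W \<times> {0..1}"
  by (simp add: space_pair_measure lam_space I01_space)

lemma space_mu: "s \<in> {0..T} \<Longrightarrow> space (mu s) = W \<times> {0..1}"
  using sets_eq_imp_space_eq[of "mu s" "lam \<Otimes>\<^sub>M I01"] mu_sets space_pair_lam_I01 by auto

lemma measurable_mu_iff:
  "s \<in> {0..T} \<Longrightarrow> measurable (mu s) N = measurable (lam \<Otimes>\<^sub>M I01) N"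
  using mu_sets by (intro measurable_cong_sets) auto

lemma sets_pair_lam_I01:
  "B \<in> sets lam \<Longrightarrow> S \<in> sets borel \<Longrightarrow> S \<subseteq> {0..1} \<Longrightarrow> B \<times> S \<in> sets (lam \<Otimes>\<^sub>M I01)"
  by (intro pair_measureI I01_sets) auto

lemma sets_mu: "s \<in> {0..T} \<Longrightarrow> sets (mu s) = sets (lam \<Otimes>\<^sub>M I01)" using mu_sets by auto

lemma sets_mu_Times:
  "s \<in> {0..T} \<Longrightarrow> B \<in> sets lam \<Longrightarrow> S \<in> sets borel \<Longrightarrow> S \<subseteq> {0..1} \<Longrightarrow> B \<times> S \<in> sets (mu s)"
  using sets_pair_lam_I01 sets_mu by auto

lemma sets_mu_interval:
  assumes "s \<in> {0..T}" "B \<in> sets lam" "0 \<le> a" "b \<le> 1"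
  shows "B \<times> {a..<b} \<in> sets (mu s)" "B \<times> {a..b} \<in> sets (mu s)"
proof -
  have "{a..<b} \<subseteq> {0..1}" "{a..b} \<subseteq> {0..1}" using assms by auto
  then show "B \<times> {a..<b} \<in> sets (mu s)" "B \<times> {a..b} \<in> sets (mu s)" using sets_mu_Times assms by auto
qed

lemma distr_mu_fst:
  assumes s: "s \<in> {0..T}"
  shows "distr (mu s) lam fst = lam"
proof (rule measure_eqI)
  interpret M: prob_space "mu s" using mu_prob s by simp
  interpret L: prob_space lam using lam_prob by simp
  show "sets (distr (mu s) lam fst) = sets lam" by simp
  have fm: "fst \<in> measurable (mu s) lam" by (subst measurable_mu_iff[OF s]) simp
  have W1: "W \<times> {1} \<in> sets (mu s)" using sets_mu[OF s] sets_pair_lam_I01[OF sets_W, of "{1}"] by simp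
  have sub: "{0..<1::real} \<subseteq> {0..1}" by auto
  have W0: "W \<times> {0..<1} \<in> sets (mu s)" using sets_mu[OF s] sets_pair_lam_I01[OF sets_W _ sub] by simp
  have "measure (mu s) (W \<times> {0..1}) = 1" using M.prob_space space_mu[OF s] by simp
  moreover have "W \<times> {0..1::real} = W \<times> {0..<1} \<union> W \<times> {1}" by auto
  moreover have "measure (mu s) (W \<times> {0..<1}) = 1" using mu_tail s by auto
  moreover have "W \<times> {0..<1} \<inter> W \<times> {1::real} = {}" by auto
  ultimately have m1: "measure (mu s) (W \<times> {1}) = 0"
    using M.finite_measure_Union[OF W0 W1] by auto
  fix A assume "A \<in> sets (distr (mu s) lam fst)"
  then have A: "A \<in> sets lam" by simp
  then have AW: "A \<subseteq> W" using sets.sets_into_space lam_space by auto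
  have "fst -` A \<inter> space (mu s) = A \<times> {0..1}" using space_mu[OF s] AW by auto
  then have "emeasure (distr (mu s) lam fst) A = emeasure (mu s) (A \<times> {0..1})"
    using emeasure_distr[OF fm A] by simp
  also have "\<dots> = ennreal (measure (mu s) (A \<times> {0..1}))" by (simp add: M.emeasure_eq_measure)
  also have "measure (mu s) (A \<times> {0..1}) = measure (mu s) (A \<times> {0..<1}) + measure (mu s) (A \<times> {1})"
  proof -
    have "A \<times> {0..1::real} = A \<times> {0..<1} \<union> A \<times> {1}" by auto
    moreover have "A \<times> {0..<1} \<in> sets (mu s)" "A \<times> {1} \<in> sets (mu s)"
      using sets_mu_interval[OF s A, of 0 1] sets_mu_interval[OF s A, of 1 1] by auto
    moreover have "A \<times> {0..<1} \<inter> A \<times> {1::real} = {}" by auto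
    ultimately show ?thesis using M.finite_measure_Union by auto
  qed
  also have "measure (mu s) (A \<times> {1}) = 0"
  proof -
    have "measure (mu s) (A \<times> {1}) \<le> measure (mu s) (W \<times> {1})"
      using AW W1 by (intro M.finite_measure_mono) auto
    then show ?thesis using m1 by (simp add: measure_nonneg antisym)
  qed
  also have "measure (mu s) (A \<times> {0..<1}) = measure lam A" using mu_marg s A by auto
  finally show "emeasure (distr (mu s) lam fst) A = emeasure lam A" by (simp add: L.emeasure_eq_measure)
qed

lemma integral_mu_fst:
  fixes G :: "fn \<Rightarrow> real"
  assumes s: "s \<in> {0..T}" and G: "integrable lam G"
  shows "integrable (mu s) (\<lambda>p. G (fst p))" "(\<integral>p. G (fst p) \<partial>mu s) = (\<integral>w. G w \<partial>lam)"
proof -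
  have fm: "fst \<in> measurable (mu s) lam" by (subst measurable_mu_iff[OF s]) simp
  have Gm: "G \<in> borel_measurable lam" using G by auto
  show "integrable (mu s) (\<lambda>p. G (fst p))"
    using integrable_distr_eq[OF fm Gm] distr_mu_fst[OF s] G by simp
  show "(\<integral>p. G (fst p) \<partial>mu s) = (\<integral>w. G w \<partial>lam)"
    using integral_distr[OF fm Gm] distr_mu_fst[OF s] by simp
qed

lemma mu_dominated:
  fixes g :: "fn \<times> real \<Rightarrow> real" and G :: "fn \<Rightarrow> real"
  assumes s: "s \<in> {0..T}" and g: "g \<in> borel_measurable (lam \<Otimes>\<^sub>M I01)" and G: "integrable lam G"
    and b: "\<And>w z. w \<in> W \<Longrightarrow> z \<in> {0..1} \<Longrightarrow> \<bar>g (w, z)\<bar> \<le> G w"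
  shows "integrable (mu s) g" "\<bar>\<integral>p. g p \<partial>mu s\<bar> \<le> (\<integral>w. G w \<partial>lam)"
    "(\<integral>p. \<bar>g p\<bar> \<partial>mu s) \<le> (\<integral>w. G w \<partial>lam)"
proof -
  have gm: "g \<in> borel_measurable (mu s)" using g by (subst measurable_mu_iff[OF s])
  have bb: "norm (g p) \<le> G (fst p)" if "p \<in> space (mu s)" for p
    using b that space_mu[OF s] by (cases p) auto
  show ig: "integrable (mu s) g"
  proof (rule Bochner_Integration.integrable_bound[OF integral_mu_fst(1)[OF s G] gm])
    show "AE x in mu s. norm (g x) \<le> norm (G (fst x))"
    proof (rule AE_I2)
      fix x assume x: "x \<in> space (mu s)"
      show "norm (g x) \<le> norm (G (fst x))" using bb[OF x] abs_ge_self[of "G (fst x)"] by simp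
    qed
  qed
  have "(\<integral>p. \<bar>g p\<bar> \<partial>mu s) \<le> (\<integral>p. G (fst p) \<partial>mu s)"
    using bb by (intro integral_mono ig[THEN integrable_abs] integral_mu_fst(1)[OF s G]) auto
  then show "(\<integral>p. \<bar>g p\<bar> \<partial>mu s) \<le> (\<integral>w. G w \<partial>lam)" using integral_mu_fst(2)[OF s G] by simp
  then show "\<bar>\<integral>p. g p \<partial>mu s\<bar> \<le> (\<integral>w. G w \<partial>lam)"
    by (rule order_trans[OF integral_abs_bound])
qed

definition tail_int :: "real \<Rightarrow> real \<Rightarrow> (fn \<Rightarrow> real) \<Rightarrow> real" where
  "tail_int t y h = (\<integral>p\<in>W \<times> {y..<1}. h (fst p) \<partial>mu t)"

definition lip_const :: real where
  "lip_const = MW T lam * exp (2 * CW T W * T)"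

lemma tail_int_indicator:
  "tail_int t y h = (\<integral>p. indicator (W \<times> {y..<1}) p * h (fst p) \<partial>mu t)"
  by (simp add: tail_int_def set_lebesgue_integral_def)

lemma measurable_indicator_strip:
  assumes "0 \<le> a" "b \<le> 1" "B \<in> sets lam"
  shows "(\<lambda>p. indicator (B \<times> {a..<b}) p :: real) \<in> borel_measurable (lam \<Otimes>\<^sub>M I01)"
proof -
  have "{a..<b} \<subseteq> {0..1}" using assms by auto
  then show ?thesis using sets_pair_lam_I01[OF assms(3)] by (intro borel_measurable_indicator) auto
qed

lemma measurable_comp_fst:
  "h \<in> borel_measurable lam \<Longrightarrow> (\<lambda>p. h (fst p)) \<in> borel_measurable (lam \<Otimes>\<^sub>M I01)"
  by (rule measurable_compose[OF measurable_fst])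

lemma integrable_lam_dominated:
  fixes f G :: "fn \<Rightarrow> real"
  assumes "integrable lam G" "f \<in> borel_measurable lam" "\<And>w. w \<in> W \<Longrightarrow> \<bar>f w\<bar> \<le> G w"
  shows "integrable lam f"
proof (rule Bochner_Integration.integrable_bound[OF assms(1,2)])
  show "AE x in lam. norm (f x) \<le> norm (G x)"
  proof (rule AE_I2)
    fix x assume "x \<in> space lam"
    then show "norm (f x) \<le> norm (G x)" using assms(3)[of x] lam_space abs_ge_self[of "G x"] by simp
  qed
qed

lemma tail_int_dominated:
  assumes t: "t \<in> {0..T}" and y: "0 \<le> y" and h: "h \<in> borel_measurable lam" and G: "integrable lam G"
    and b: "\<And>w. w \<in> W \<Longrightarrow> \<bar>h w\<bar> \<le> G w"
  shows "integrable (mu t) (\<lambda>p. indicator (W \<times> {y..<1}) p * h (fst p))" "\<bar>tail_int t y h\<bar> \<le> (\<integral>w. G w \<partial>lam)"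
proof -
  have m: "(\<lambda>p. indicator (W \<times> {y..<1}) p * h (fst p)) \<in> borel_measurable (lam \<Otimes>\<^sub>M I01)"
    using measurable_indicator_strip[OF y order_refl sets_W] measurable_comp_fst[OF h] by (rule borel_measurable_times)
  have bb: "\<bar>indicator (W \<times> {y..<1}) (w, z) * h (fst (w, z))\<bar> \<le> G w" if "w \<in> W" for w z
    using b[OF that] by (auto simp: indicator_def)
  show "integrable (mu t) (\<lambda>p. indicator (W \<times> {y..<1}) p * h (fst p))"
    by (rule mu_dominated(1)[OF t m G bb])
  show "\<bar>tail_int t y h\<bar> \<le> (\<integral>w. G w \<partial>lam)" unfolding tail_int_indicator
    by (rule mu_dominated(2)[OF t m G bb])
qed

lemma tail_int_bounded:
  assumes t: "t \<in> {0..T}" and y: "0 \<le> y" and h: "h \<in> borel_measurable lam"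
    and b: "\<And>w. w \<in> W \<Longrightarrow> \<bar>h w\<bar> \<le> M"
  shows "integrable (mu t) (\<lambda>p. indicator (W \<times> {y..<1}) p * h (fst p))" "\<bar>tail_int t y h\<bar> \<le> M"
proof -
  interpret L: prob_space lam by (rule lam_prob)
  have G: "integrable lam (\<lambda>w. M)" by simp
  show "integrable (mu t) (\<lambda>p. indicator (W \<times> {y..<1}) p * h (fst p))" by (rule tail_int_dominated(1)[OF t y h G b])
  show "\<bar>tail_int t y h\<bar> \<le> M" using tail_int_dominated(2)[OF t y h G b] prob_space.prob_space[OF lam_prob] by simp
qed

lemma tail_int_add:
  assumes "integrable (mu t) (\<lambda>p. indicator (W \<times> {y..<1}) p * h (fst p))"
    "integrable (mu t) (\<lambda>p. indicator (W \<times> {y..<1}) p * g (fst p))"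
  shows "tail_int t y (\<lambda>w. h w + g w) = tail_int t y h + tail_int t y g"
    "tail_int t y (\<lambda>w. h w - g w) = tail_int t y h - tail_int t y g"
  unfolding tail_int_indicator using assms by (simp_all add: distrib_left right_diff_distrib)

lemma tail_int_cmult: "tail_int t y (\<lambda>w. c * h w) = c * tail_int t y h"
  unfolding tail_int_indicator by (simp add: mult.left_commute)

lemma tail_int_cong:
  assumes "s \<in> {0..T}" "\<And>w. w \<in> W \<Longrightarrow> g w = h w"
  shows "tail_int s y g = tail_int s y h"
  unfolding tail_int_indicator using assms space_mu[OF assms(1)]
  by (intro Bochner_Integration.integral_cong[OF refl]) (auto simp: indicator_def)

lemma tail_int_indicator_eq_measure:
  assumes s: "s \<in> {0..T}" and B: "B \<in> sets lam" and z: "0 \<le> z"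
  shows "tail_int s z (indicator B) = measure (mu s) (B \<times> {z..<1})"
proof -
  interpret Ms: prob_space "mu s" using mu_prob s by simp
  have "B \<subseteq> W" using sets.sets_into_space[OF B] lam_space by simp
  then have "tail_int s z (indicator B) = (\<integral>p. indicator (B \<times> {z..<1}) p \<partial>mu s)"
    unfolding tail_int_indicator by (intro Bochner_Integration.integral_cong[OF refl]) (auto simp: indicator_def)
  then show ?thesis using sets_mu_interval(1)[OF s B z, of 1] by simp
qed

lemma tail_int_strip:
  assumes s: "s \<in> {0..T}" and yx: "0 \<le> y" "y \<le> x" "x \<le> 1" and h: "h \<in> borel_measurable lam"
    and hb: "\<And>w. w \<in> W \<Longrightarrow> \<bar>h w\<bar> \<le> K"
  shows "(\<integral>p\<in>W \<times> {y..<x}. h (fst p) \<partial>mu s) = tail_int s y h - tail_int s x h"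
proof -
  have i1: "integrable (mu s) (\<lambda>p. indicator (W \<times> {y..<1}) p * h (fst p))"
    by (rule tail_int_bounded(1)[OF s yx(1) h hb])
  have i2: "integrable (mu s) (\<lambda>p. indicator (W \<times> {x..<1}) p * h (fst p))"
    by (rule tail_int_bounded(1)[OF s _ h hb]) (use yx in auto)
  have "(\<integral>p\<in>W \<times> {y..<x}. h (fst p) \<partial>mu s)
      = (\<integral>p. indicator (W \<times> {y..<1}) p * h (fst p) - indicator (W \<times> {x..<1}) p * h (fst p) \<partial>mu s)"
    unfolding set_lebesgue_integral_def
    by (rule Bochner_Integration.integral_cong[OF refl]) (use yx in \<open>auto simp: indicator_def\<close>)
  also have "\<dots> = tail_int s y h - tail_int s x h" using i1 i2 by (simp add: tail_int_indicator)
  finally show ?thesis .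
qed

lemma tail_int_lipschitz:
  assumes h: "h \<in> borel_measurable lam" and b: "\<And>w. w \<in> W \<Longrightarrow> \<bar>h w\<bar> \<le> M"
    and t: "t \<in> {0..T}" "t' \<in> {0..T}" and y: "y \<in> {0..1}" "y' \<in> {0..1}"
  shows "\<bar>tail_int t' y' h - tail_int t y h\<bar> \<le> M * (\<bar>y' - y\<bar> + lip_const * \<bar>t' - t\<bar>)"
proof -
  obtain w0 where "w0 \<in> W" using W_nonempty by auto
  then have M0: "M \<ge> 0" using b[of w0] by linarith
  show ?thesis
  proof (cases "M = 0")
    case True
    then have "\<And>w. w \<in> W \<Longrightarrow> h w = 0" using b by fastforce
    then have "tail_int t y h = 0" for t y unfolding tail_int_indicator
      by (intro integral_eq_zero_AE AE_I2) (auto simp: indicator_def)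
    then show ?thesis using True by simp
  next
    case False
    then have Mp: "M > 0" using M0 by simp
    let ?h = "\<lambda>w. h w / M"
    have hm: "?h \<in> borel_measurable lam" using h by simp
    have hb: "\<forall>w\<in>W. \<bar>?h w\<bar> \<le> 1"
    proof
      fix w assume "w \<in> W"
      then have hw: "\<bar>h w\<bar> \<le> M" by (rule b)
      have "\<bar>?h w\<bar> = \<bar>h w\<bar> / M" using Mp by simp
      also have "\<dots> \<le> 1" using Mp hw by (simp add: divide_le_eq)
      finally show "\<bar>?h w\<bar> \<le> 1" .
    qed
    have "\<bar>tail_int t' y' ?h - tail_int t y ?h\<bar> \<le> \<bar>y' - y\<bar> + lip_const * \<bar>t' - t\<bar>"
      using lip[rule_format, OF conjI[OF hm hb] y(1) t(1) y(2) t(2)] unfolding tail_int_def lip_const_def .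
    moreover have "tail_int s z h = M * tail_int s z ?h" for s z
      using tail_int_cmult[of s z M ?h] Mp by simp
    ultimately show ?thesis using Mp
      by (simp add: right_diff_distrib[symmetric] abs_mult mult_left_mono)
  qed
qed

text \<open>Split \<open>h\<close> into its truncation at level \<open>M\<close>, controlled by hypothesis (3), and a
  remainder bounded by \<open>(G - M)\<^sup>+\<close>.\<close>

lemma tail_int_truncated_lipschitz:
  assumes h: "h \<in> borel_measurable lam" and G: "integrable lam G" and b: "\<And>w. w \<in> W \<Longrightarrow> \<bar>h w\<bar> \<le> G w"
    and M: "M \<ge> 0" and t: "t \<in> {0..T}" "t' \<in> {0..T}" and y: "y \<in> {0..1}" "y' \<in> {0..1}"
  shows "\<bar>tail_int t' y' h - tail_int t y h\<bar> \<le> 2 * (\<integral>w. max 0 (G w - M) \<partial>lam) + M * (\<bar>y' - y\<bar> + lip_const * \<bar>t' - t\<bar>)"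
proof -
  define hM where "hM w = max (-M) (min M (h w))" for w
  define r where "r w = h w - hM w" for w
  have hMm: "hM \<in> borel_measurable lam" unfolding hM_def using h by measurable
  have rm: "r \<in> borel_measurable lam" unfolding r_def using h hMm by measurable
  have hMb: "\<bar>hM w\<bar> \<le> M" for w unfolding hM_def using M by auto
  have rb: "\<bar>r w\<bar> \<le> max 0 (G w - M)" if "w \<in> W" for w
    using b[OF that] M unfolding r_def hM_def by (auto simp: max_def min_def abs_if split: if_splits)
  have E: "integrable lam (\<lambda>w. max 0 (G w - M))"
  proof -
    interpret L: prob_space lam by (rule lam_prob)
    show ?thesis using G by (intro integrable_max) auto
  qed
  have dec: "tail_int s z h = tail_int s z hM + tail_int s z r" if "s \<in> {0..T}" "z \<in> {0..1}" for s z
  proof -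
    have "tail_int s z (\<lambda>w. hM w + r w) = tail_int s z hM + tail_int s z r"
      using that by (intro tail_int_add(1) tail_int_bounded(1)[OF _ _ hMm hMb] tail_int_dominated(1)[OF _ _ rm E rb]) auto
    moreover have "(\<lambda>w. hM w + r w) = h" unfolding r_def by auto
    ultimately show ?thesis by simp
  qed
  have rB: "\<bar>tail_int s z r\<bar> \<le> (\<integral>w. max 0 (G w - M) \<partial>lam)" if "s \<in> {0..T}" "z \<in> {0..1}" for s z
    using that by (intro tail_int_dominated(2)[OF _ _ rm E rb]) auto
  have "\<bar>tail_int t' y' hM - tail_int t y hM\<bar> \<le> M * (\<bar>y' - y\<bar> + lip_const * \<bar>t' - t\<bar>)"
    by (rule tail_int_lipschitz[OF hMm hMb t y])
  then show ?thesis using dec[OF t(1) y(1)] dec[OF t(2) y(2)] rB[OF t(1) y(1)] rB[OF t(2) y(2)]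
    by linarith
qed

lemma abs_tail_int_diff_le:
  assumes t: "t \<in> {0..T}" and y: "0 \<le> y" and G: "integrable lam G"
    and g: "g \<in> borel_measurable lam" "\<And>w. w \<in> W \<Longrightarrow> \<bar>g w\<bar> \<le> G w"
    and h: "h \<in> borel_measurable lam" "\<And>w. w \<in> W \<Longrightarrow> \<bar>h w\<bar> \<le> G w"
  shows "\<bar>tail_int t y g - tail_int t y h\<bar> \<le> (\<integral>w. \<bar>g w - h w\<bar> \<partial>lam)"
proof -
  have "\<bar>tail_int t y (\<lambda>w. g w - h w)\<bar> \<le> (\<integral>w. \<bar>g w - h w\<bar> \<partial>lam)"
  proof (rule tail_int_dominated(2)[OF t y _ _ order_refl])
    show "(\<lambda>w. g w - h w) \<in> borel_measurable lam" using g h by measurable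
    show "integrable lam (\<lambda>w. \<bar>g w - h w\<bar>)"
      using integrable_lam_dominated[OF G g] integrable_lam_dominated[OF G h] by auto
  qed
  then show ?thesis
    using tail_int_add(2)[OF tail_int_dominated(1)[OF t y g(1) G g(2)] tail_int_dominated(1)[OF t y h(1) G h(2)]]
    by simp
qed

lemma tail_int_tendsto_fixed:
  fixes s y :: "nat \<Rightarrow> real"
  assumes s: "\<And>n. s n \<in> {0..T}" "s \<longlonglongrightarrow> s0" "s0 \<in> {0..T}"
    and y: "\<And>n. y n \<in> {0..1}" "y \<longlonglongrightarrow> y0" "y0 \<in> {0..1}"
    and g: "g \<in> borel_measurable lam" and G: "integrable lam G" and gb: "\<And>w. w \<in> W \<Longrightarrow> \<bar>g w\<bar> \<le> G w"
  shows "(\<lambda>n. tail_int (s n) (y n) g) \<longlonglongrightarrow> tail_int s0 y0 g"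
  unfolding tendsto_iff
proof (intro allI impI)
  fix e :: real assume e: "e > 0"
  obtain m where m: "(\<integral>w. max 0 (G w - real m) \<partial>lam) < e / 4"
    using order_tendstoD(2)[OF integral_excess_tendsto_0[OF G], of "e / 4"] e
    by (auto simp: eventually_sequentially)
  have "(\<lambda>n. real m * (\<bar>y n - y0\<bar> + lip_const * \<bar>s n - s0\<bar>))
      \<longlonglongrightarrow> real m * (\<bar>y0 - y0\<bar> + lip_const * \<bar>s0 - s0\<bar>)"
    using s(2) y(2) by (intro tendsto_intros)
  then have "\<forall>\<^sub>F n in sequentially. real m * (\<bar>y n - y0\<bar> + lip_const * \<bar>s n - s0\<bar>) < e / 2"
    using e by (intro order_tendstoD(2)) auto
  then show "\<forall>\<^sub>F n in sequentially. dist (tail_int (s n) (y n) g) (tail_int s0 y0 g) < e"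
  proof eventually_elim
    case (elim n)
    have "\<bar>tail_int (s n) (y n) g - tail_int s0 y0 g\<bar>
        \<le> 2 * (\<integral>w. max 0 (G w - real m) \<partial>lam) + real m * (\<bar>y n - y0\<bar> + lip_const * \<bar>s n - s0\<bar>)"
      by (rule tail_int_truncated_lipschitz[OF g G gb of_nat_0_le_iff s(3) s(1) y(3) y(1)])
    then show ?case using m elim by (simp add: dist_real_def)
  qed
qed

lemma tail_int_tendsto:
  fixes s y :: "nat \<Rightarrow> real" and g :: "nat \<Rightarrow> fn \<Rightarrow> real"
  assumes s: "\<And>n. s n \<in> {0..T}" "s \<longlonglongrightarrow> s0" "s0 \<in> {0..T}"
    and y: "\<And>n. y n \<in> {0..1}" "y \<longlonglongrightarrow> y0" "y0 \<in> {0..1}"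
    and gm: "\<And>n. g n \<in> borel_measurable lam" "g0 \<in> borel_measurable lam"
    and G: "integrable lam G"
    and gb: "\<And>n w. w \<in> W \<Longrightarrow> \<bar>g n w\<bar> \<le> G w" "\<And>w. w \<in> W \<Longrightarrow> \<bar>g0 w\<bar> \<le> G w"
    and conv: "\<And>w. w \<in> W \<Longrightarrow> (\<lambda>n. g n w) \<longlonglongrightarrow> g0 w"
  shows "(\<lambda>n. tail_int (s n) (y n) (g n)) \<longlonglongrightarrow> tail_int s0 y0 g0"
proof -
  have D: "(\<lambda>n. \<integral>w. \<bar>g n w - g0 w\<bar> \<partial>lam) \<longlonglongrightarrow> (\<integral>w. 0 \<partial>lam)"
  proof (rule integral_dominated_convergence[where w="\<lambda>w. 2 * G w"])
    show "(\<lambda>w. \<bar>g n w - g0 w\<bar>) \<in> borel_measurable lam" for n using gm by measurable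
    show "AE w in lam. (\<lambda>n. \<bar>g n w - g0 w\<bar>) \<longlonglongrightarrow> 0"
      using conv lam_space by (intro AE_I2) (simp add: tendsto_rabs_zero_iff LIM_zero)
    show "AE w in lam. norm \<bar>g n w - g0 w\<bar> \<le> 2 * G w" for n
    proof (rule AE_I2)
      fix w assume "w \<in> space lam"
      then show "norm \<bar>g n w - g0 w\<bar> \<le> 2 * G w" using gb(1)[of w n] gb(2)[of w] lam_space by auto
    qed
    show "(\<lambda>w. 0::real) \<in> borel_measurable lam" by simp
    show "integrable lam (\<lambda>w. 2 * G w)" using G by simp
  qed
  have "(\<lambda>n. tail_int (s n) (y n) (g n) - tail_int (s n) (y n) g0) \<longlonglongrightarrow> 0"
  proof (rule Lim_null_comparison[OF _ D[simplified]])
    show "\<forall>\<^sub>F n in sequentially. norm (tail_int (s n) (y n) (g n) - tail_int (s n) (y n) g0)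
        \<le> (\<integral>w. \<bar>g n w - g0 w\<bar> \<partial>lam)"
      using abs_tail_int_diff_le[OF s(1) _ G gm(1) gb(1) gm(2) gb(2)] y(1) by (intro always_eventually) auto
  qed
  from tendsto_add[OF this tail_int_tendsto_fixed[OF s y gm(2) G gb(2)]] show ?thesis by simp
qed

lemma integral_dwdy_tail:
  assumes w: "w \<in> W" and s: "s \<in> {0..T}" and z: "0 \<le> z" "z \<le> 1"
  shows "integrable lborel (\<lambda>x. indicator {z<..<1} x * dwdy w x s)"
    "(\<integral>x. indicator {z<..<1} x * dwdy w x s \<partial>lborel) = w 1 s - w z s"
proof -
  have c: "continuous_on {z..1} (\<lambda>x. dwdy w x s)"
    by (rule continuous_on_subset[OF continuous_on_dwdy_space[OF w s]]) (use z in auto)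
  have si: "set_integrable lborel {z..1} (\<lambda>x. dwdy w x s)"
    unfolding set_integrable_def by (rule borel_integrable_compact[OF compact_Icc c])
  have "((\<lambda>x. dwdy w x s) has_integral (w 1 s - w z s)) {z..1}"
  proof (rule fundamental_theorem_of_calculus[OF z(2)])
    fix x assume x: "x \<in> {z..1}"
    then have "(x, s) \<in> rect T" using z s unfolding rect_def by auto
    from C1_rect_dwdy(1)[OF W_C1_rect[OF w] this]
    show "((\<lambda>y. w y s) has_vector_derivative dwdy w x s) (at x within {z..1})"
      by (rule has_vector_derivative_within_subset) (use z in auto)
  qed
  then have I1: "(LINT x:{z..1}|lborel. dwdy w x s) = w 1 s - w z s"
    using set_borel_integral_eq_integral(2)[OF si] by (simp add: integral_unique)
  have m1: "(\<lambda>x. indicator {z..1} x *\<^sub>R dwdy w x s) \<in> borel_measurable borel"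
    by (rule borel_measurable_continuous_on_indicator[OF _ c]) simp
  have m2: "(\<lambda>x. indicator {z<..<1} x *\<^sub>R dwdy w x s) \<in> borel_measurable borel"
    by (rule borel_measurable_continuous_on_indicator)
       (auto intro: continuous_on_subset[OF c])
  have ae: "AE x in lborel. indicator {z<..<1} x * dwdy w x s = indicator {z..1} x * dwdy w x s"
    using AE_lborel_singleton[of z] AE_lborel_singleton[of 1]
    by eventually_elim (auto simp: indicator_def)
  have i1: "integrable lborel (\<lambda>x. indicator {z..1} x * dwdy w x s)"
    using si unfolding set_integrable_def by simp
  have m1': "(\<lambda>x. indicator {z..1} x * dwdy w x s) \<in> borel_measurable lborel" using m1 by simp
  have m2': "(\<lambda>x. indicator {z<..<1} x * dwdy w x s) \<in> borel_measurable lborel" using m2 by simp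
  show "integrable lborel (\<lambda>x. indicator {z<..<1} x * dwdy w x s)"
    using integrable_cong_AE[OF m2' m1' ae] i1 by (rule iffD2)
  have "(\<integral>x. indicator {z<..<1} x * dwdy w x s \<partial>lborel) = (\<integral>x. indicator {z..1} x * dwdy w x s \<partial>lborel)"
    by (rule integral_cong_AE[OF m2' m1' ae])
  then show "(\<integral>x. indicator {z<..<1} x * dwdy w x s \<partial>lborel) = w 1 s - w z s"
    using I1 unfolding set_lebesgue_integral_def by simp
qed

definition rate_int :: "real \<Rightarrow> real \<Rightarrow> (fn \<Rightarrow> real) \<Rightarrow> real" where
  "rate_int s y f = (\<integral>p\<in>W \<times> {y..<1}. f (fst p) * fst p (snd p) s \<partial>mu s)"

definition grad_int :: "real \<Rightarrow> real \<Rightarrow> (fn \<Rightarrow> real) \<Rightarrow> real" where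
  "grad_int s y f = (\<integral>x\<in>{y..<1}. (\<integral>p\<in>W \<times> {y..<x}. f (fst p) * dwdy (fst p) x s \<partial>mu s) \<partial>lborel)"

lemma rate_int_indicator:
  "rate_int s y g = (\<integral>p. indicator (W \<times> {y..<1}) p * (g (fst p) * fst p (snd p) s) \<partial>mu s)"
  by (simp add: rate_int_def set_lebesgue_integral_def)

lemma integrable_abs_times_supnorm:
  assumes g: "g \<in> borel_measurable lam" and gb: "\<And>w. w \<in> W \<Longrightarrow> \<bar>g w\<bar> \<le> K"
  shows "integrable lam (\<lambda>w. \<bar>g w\<bar> * supnorm T w)"
proof (rule integrable_lam_dominated[of "\<lambda>w. K * supnorm T w"])
  show "(\<lambda>w. \<bar>g w\<bar> * supnorm T w) \<in> borel_measurable lam"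
    using g MW_fin by measurable
  show "\<bar>\<bar>g w\<bar> * supnorm T w\<bar> \<le> K * supnorm T w" if w: "w \<in> W" for w
    using gb[OF w] W_supnorm_nonneg[OF w] by (auto simp: abs_mult intro: mult_right_mono)
qed (use MW_fin in simp)

lemma rate_int_dominated:
  assumes s: "s \<in> {0..T}" and y: "y \<in> {0..1}" and g: "g \<in> borel_measurable lam"
    and gb: "\<And>w. w \<in> W \<Longrightarrow> \<bar>g w\<bar> \<le> K"
  shows "integrable (mu s) (\<lambda>p. indicator (W \<times> {y..<1}) p * (g (fst p) * fst p (snd p) s))"
    "\<bar>rate_int s y g\<bar> \<le> (\<integral>w. \<bar>g w\<bar> * supnorm T w \<partial>lam)"
proof -
  have m: "(\<lambda>p. indicator (W \<times> {y..<1}) p * (g (fst p) * fst p (snd p) s)) \<in> borel_measurable (lam \<Otimes>\<^sub>M I01)"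
    using measurable_indicator_strip[of y 1 W] y sets_W measurable_comp_fst[OF g] measurable_eval_comp[OF measurable_fst measurable_snd_I01, of s]
    by (intro borel_measurable_times) auto
  note Gi = integrable_abs_times_supnorm[OF g gb]
  have bb: "\<bar>indicator (W \<times> {y..<1}) (w, z) * (g (fst (w, z)) * fst (w, z) (snd (w, z)) s)\<bar> \<le> \<bar>g w\<bar> * supnorm T w"
    if w: "w \<in> W" and "z \<in> {0..1}" for w z
    using W_abs_le_supnorm[OF w, of z s] W_supnorm_nonneg[OF w] T_pos
    by (auto simp: abs_mult indicator_def intro: mult_left_mono)
  show "integrable (mu s) (\<lambda>p. indicator (W \<times> {y..<1}) p * (g (fst p) * fst p (snd p) s))"
    by (rule mu_dominated(1)[OF s m Gi bb])
  show "\<bar>rate_int s y g\<bar> \<le> (\<integral>w. \<bar>g w\<bar> * supnorm T w \<partial>lam)"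
    unfolding rate_int_indicator by (rule mu_dominated(2)[OF s m Gi bb])
qed

lemma rate_int_add:
  assumes "s \<in> {0..T}" "y \<in> {0..1}" "g \<in> borel_measurable lam" "\<And>w. w \<in> W \<Longrightarrow> \<bar>g w\<bar> \<le> K"
    "h \<in> borel_measurable lam" "\<And>w. w \<in> W \<Longrightarrow> \<bar>h w\<bar> \<le> K'"
  shows "rate_int s y (\<lambda>w. g w + h w) = rate_int s y g + rate_int s y h"
  using rate_int_dominated(1)[OF assms(1-4)] rate_int_dominated(1)[OF assms(1,2,5,6)]
  unfolding rate_int_indicator by (simp add: distrib_left distrib_right)

lemma rate_int_cmult: "rate_int s y (\<lambda>w. c * g w) = c * rate_int s y g"
  unfolding rate_int_indicator by (simp add: mult.left_commute mult.assoc)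

lemma rate_int_cong:
  assumes "s \<in> {0..T}" "\<And>w. w \<in> W \<Longrightarrow> g w = h w"
  shows "rate_int s y g = rate_int s y h"
  unfolding rate_int_indicator using assms space_mu[OF assms(1)]
  by (intro Bochner_Integration.integral_cong[OF refl]) (auto simp: indicator_def)

lemma abs_rate_int_diff_le:
  assumes s: "s \<in> {0..T}" and y: "y \<in> {0..1}" and g: "g \<in> borel_measurable lam" "\<And>w. w \<in> W \<Longrightarrow> \<bar>g w\<bar> \<le> K"
    and h: "h \<in> borel_measurable lam" "\<And>w. w \<in> W \<Longrightarrow> \<bar>h w\<bar> \<le> K'"
  shows "\<bar>rate_int s y g - rate_int s y h\<bar> \<le> (\<integral>w. \<bar>g w - h w\<bar> * supnorm T w \<partial>lam)"
proof -
  have "rate_int s y (\<lambda>w. g w - h w) = rate_int s y g - rate_int s y h"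
    using rate_int_dominated(1)[OF s y g] rate_int_dominated(1)[OF s y h] unfolding rate_int_indicator by (simp add: algebra_simps)
  moreover have "\<bar>rate_int s y (\<lambda>w. g w - h w)\<bar> \<le> (\<integral>w. \<bar>g w - h w\<bar> * supnorm T w \<partial>lam)"
  proof (rule rate_int_dominated(2)[OF s y])
    show "(\<lambda>w. g w - h w) \<in> borel_measurable lam" using g h by measurable
    fix w assume "w \<in> W" then show "\<bar>g w - h w\<bar> \<le> K + K'" using g(2) h(2) by fastforce
  qed
  ultimately show ?thesis by simp
qed

text \<open>Integrating the kernel in \<open>x\<close> gives \<open>g(w) (w(1, s) - w(z, s))\<close> by the fundamental theorem
  of calculus, integrating it in \<open>(w, z)\<close> gives the integrand of \<open>grad_int\<close>; Fubini then
  yields the integration by parts formula \<open>rate_int_by_parts\<close>.\<close>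

definition grad_kernel :: "real \<Rightarrow> real \<Rightarrow> (fn \<Rightarrow> real) \<Rightarrow> fn \<times> real \<Rightarrow> real \<Rightarrow> real" where
  "grad_kernel s y g p x = indicator (W \<times> {y..<x}) p * g (fst p) * (indicator {0..<1} x * dwdy (fst p) x s)"

lemma measurable_grad_kernel:
  assumes s: "s \<in> {0..T}" and g: "g \<in> borel_measurable lam"
  shows "(\<lambda>q. grad_kernel s y g (fst q) (snd q)) \<in> borel_measurable (mu s \<Otimes>\<^sub>M lborel)"
proof -
  let ?M = "(lam \<Otimes>\<^sub>M I01) \<Otimes>\<^sub>M (lborel :: real measure)"
  have fst1: "(\<lambda>q. fst (fst q)) \<in> measurable ?M lam"
    by (rule measurable_compose[OF measurable_fst measurable_fst])
  have snd1: "(\<lambda>q. snd (fst q)) \<in> borel_measurable ?M"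
    by (rule measurable_compose[OF measurable_fst measurable_snd_I01])
  have snd2: "(\<lambda>q. snd q) \<in> borel_measurable ?M"
    using measurable_compose[OF measurable_snd measurable_ident_sets[of "lborel :: real measure" borel]] by simp
  have "(\<lambda>q. indicator (W \<times> {y..<snd q}) (fst q) :: real)
      = (\<lambda>q. indicator W (fst (fst q)) * (if y \<le> snd (fst q) \<and> snd (fst q) < snd q then 1 else 0))"
    by (auto simp: indicator_def fun_eq_iff)
  moreover have "(\<lambda>q. indicator W (fst (fst q)) * (if y \<le> snd (fst q) \<and> snd (fst q) < snd q then 1 else 0 :: real))
      \<in> borel_measurable ?M"
    using measurable_compose[OF fst1 borel_measurable_indicator[OF sets_W]] snd1 snd2 by measurable
  ultimately have "(\<lambda>q. grad_kernel s y g (fst q) (snd q)) \<in> borel_measurable ?M"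
    unfolding grad_kernel_def
    by (intro borel_measurable_times measurable_compose[OF fst1 g] measurable_dwdy_comp[OF fst1 snd2 s]) simp
  then show ?thesis
    by (subst measurable_cong_sets[OF sets_pair_measure_cong[OF sets_mu[OF s] refl] refl])
qed

lemma grad_kernel_eq:
  assumes "p \<in> W \<times> {0..1}" "0 \<le> y"
  shows "grad_kernel s y g p x = indicator (W \<times> {y..<1}) p * g (fst p) * (indicator {snd p<..<1} x * dwdy (fst p) x s)"
  using assms unfolding grad_kernel_def by (cases p) (auto simp: indicator_def)

lemma abs_grad_kernel_le:
  assumes "p \<in> W \<times> {0..1}" "0 \<le> y" "s \<in> {0..T}" "\<And>w. w \<in> W \<Longrightarrow> \<bar>g w\<bar> \<le> K"
  shows "\<bar>grad_kernel s y g p x\<bar> \<le> indicator {0..1} x * (K * CW T W)"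
proof (cases "x \<in> {snd p<..<1} \<and> p \<in> W \<times> {y..<1}")
  case True
  then have "\<bar>dwdy (fst p) x s\<bar> \<le> CW T W"
    using assms by (intro abs_dwdy_le_CW[OF CW_fin]) auto
  moreover have "\<bar>g (fst p)\<bar> \<le> K" using assms by auto
  ultimately show ?thesis
    using True assms grad_kernel_eq[OF assms(1,2)] CW_nonneg
    by (auto simp: abs_mult indicator_def intro: mult_mono')
next
  case False
  have "0 \<le> K" using assms(1) assms(4)[of "fst p"] by force
  with False show ?thesis
    using assms(1,2) grad_kernel_eq[OF assms(1,2)] CW_nonneg by (auto simp: indicator_def)
qed

lemma grad_kernel_integral_space:
  assumes s: "s \<in> {0..T}" and p: "p \<in> W \<times> {0..1}" and y: "0 \<le> y"
  shows "integrable lborel (grad_kernel s y g p)"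
    and "(\<integral>x. grad_kernel s y g p x \<partial>lborel)
           = indicator (W \<times> {y..<1}) p * (g (fst p) * (fst p 1 s - fst p (snd p) s))"
proof -
  have eq: "grad_kernel s y g p = (\<lambda>x. indicator (W \<times> {y..<1}) p * g (fst p)
      * (indicator {snd p<..<1} x * dwdy (fst p) x s))"
    using grad_kernel_eq[OF p y] by (simp add: fun_eq_iff)
  note ftc = integral_dwdy_tail[of "fst p" s "snd p"]
  show "integrable lborel (grad_kernel s y g p)"
    unfolding eq using ftc(1) s p by (simp add: mem_Times_iff)
  show "(\<integral>x. grad_kernel s y g p x \<partial>lborel)
      = indicator (W \<times> {y..<1}) p * (g (fst p) * (fst p 1 s - fst p (snd p) s))"
    unfolding eq using ftc(2) s p by (simp add: mem_Times_iff)
qed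

lemma grad_kernel_integral_measure:
  assumes s: "s \<in> {0..T}" and yx: "0 \<le> y" "y \<le> x" "x < 1"
    and g: "g \<in> borel_measurable lam" and gb: "\<And>w. w \<in> W \<Longrightarrow> \<bar>g w\<bar> \<le> K"
  shows "(\<integral>p. grad_kernel s y g p x \<partial>mu s)
           = tail_int s y (\<lambda>w. g w * dwdy w x s) - tail_int s x (\<lambda>w. g w * dwdy w x s)"
proof -
  have "(\<integral>p. grad_kernel s y g p x \<partial>mu s) = (\<integral>p\<in>W \<times> {y..<x}. g (fst p) * dwdy (fst p) x s \<partial>mu s)"
    unfolding grad_kernel_def set_lebesgue_integral_def using yx
    by (intro Bochner_Integration.integral_cong) (auto simp: indicator_def)
  also have "\<dots> = tail_int s y (\<lambda>w. g w * dwdy w x s) - tail_int s x (\<lambda>w. g w * dwdy w x s)"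
  proof (rule tail_int_strip[OF s yx(1,2)])
    show "(\<lambda>w. g w * dwdy w x s) \<in> borel_measurable lam"
      using g measurable_dwdy[of x s] yx s by (intro borel_measurable_times) auto
    show "\<bar>g w * dwdy w x s\<bar> \<le> K * CW T W" if "w \<in> W" for w
      using gb[OF that] abs_dwdy_le_CW[OF CW_fin that, of x s] yx s CW_nonneg
      by (auto simp: abs_mult intro: mult_mono')
  qed (use yx in auto)
  finally show ?thesis .
qed

lemma grad_int_eq_kernel:
  assumes "0 \<le> y"
  shows "grad_int s y g = (\<integral>x. (\<integral>p. grad_kernel s y g p x \<partial>mu s) \<partial>lborel)"
proof -
  have "indicator {y..<1} x * (\<integral>p\<in>W \<times> {y..<x}. g (fst p) * dwdy (fst p) x s \<partial>mu s)
      = (\<integral>p. grad_kernel s y g p x \<partial>mu s)" for x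
    unfolding grad_kernel_def set_lebesgue_integral_def using assms
    by (cases "x \<in> {y..<1}") (auto simp: indicator_def intro!: Bochner_Integration.integral_cong)
  then show ?thesis unfolding grad_int_def set_lebesgue_integral_def by simp
qed

lemma integrable_grad_kernel:
  assumes s: "s \<in> {0..T}" and y: "0 \<le> y" and f: "f \<in> borel_measurable lam"
    and fb: "\<And>w. w \<in> W \<Longrightarrow> \<bar>f w\<bar> \<le> M"
  shows "integrable (mu s \<Otimes>\<^sub>M lborel) (\<lambda>q. grad_kernel s y f (fst q) (snd q))"
proof -
  interpret Ms: prob_space "mu s" using mu_prob s by simp
  interpret P: pair_sigma_finite "mu s" lborel
    by (simp add: pair_sigma_finite_def Ms.sigma_finite_measure sigma_finite_lborel)
  have sp: "p \<in> space (mu s) \<longleftrightarrow> p \<in> W \<times> {0..1}" for p using space_mu[OF s] by auto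
  have "(\<integral>x. norm (grad_kernel s y f p x) \<partial>lborel) \<le> M * CW T W" if "p \<in> W \<times> {0..1}" for p
  proof -
    have "(\<integral>x. norm (grad_kernel s y f p x) \<partial>lborel) \<le> (\<integral>x. indicator {0..1::real} x * (M * CW T W) \<partial>lborel)"
    proof (rule Bochner_Integration.integral_mono)
      show "integrable lborel (\<lambda>x. norm (grad_kernel s y f p x))"
        using grad_kernel_integral_space(1)[OF s that y] by simp
      show "integrable lborel (\<lambda>x. indicator {0..1::real} x * (M * CW T W))"
        by (intro integrable_mult_left integrable_real_indicator) auto
    qed (use abs_grad_kernel_le[OF that y s fb] in simp)
    then show ?thesis by simp
  qed
  then have "integrable (mu s) (\<lambda>p. \<integral>x. norm (grad_kernel s y f p x) \<partial>lborel)"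
    using measurable_grad_kernel[OF s f] sp
    by (intro Ms.integrable_const_bound[where B="M * CW T W"] AE_I2
          lborel.borel_measurable_lebesgue_integral) auto
  then show ?thesis
    using grad_kernel_integral_space(1)[OF s _ y] sp
    by (intro P.Fubini_integrable[OF measurable_grad_kernel[OF s f]] AE_I2) auto
qed

lemma rate_int_by_parts:
  assumes s: "s \<in> {0..T}" and y: "y \<in> {0..1}" and f: "f \<in> borel_measurable lam"
    and fb: "\<And>w. w \<in> W \<Longrightarrow> \<bar>f w\<bar> \<le> M"
  shows "rate_int s y f = tail_int s y (\<lambda>w. f w * w 1 s) - grad_int s y f"
proof -
  interpret Ms: prob_space "mu s" using mu_prob s by simp
  interpret P: pair_sigma_finite "mu s" lborel
    by (simp add: pair_sigma_finite_def Ms.sigma_finite_measure sigma_finite_lborel)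
  have sp: "p \<in> space (mu s) \<longleftrightarrow> p \<in> W \<times> {0..1}" for p using space_mu[OF s] by auto
  have "grad_int s y f = (\<integral>p. (\<integral>x. grad_kernel s y f p x \<partial>lborel) \<partial>mu s)"
    using grad_int_eq_kernel[of y s f] y integrable_grad_kernel[OF s _ f fb]
      P.Fubini_integral[of "\<lambda>p x. grad_kernel s y f p x"]
    by (simp add: case_prod_beta')
  also have "\<dots> = (\<integral>p. indicator (W \<times> {y..<1}) p * (f (fst p) * fst p 1 s)
                     - indicator (W \<times> {y..<1}) p * (f (fst p) * fst p (snd p) s) \<partial>mu s)"
    using grad_kernel_integral_space(2)[OF s] y sp
    by (intro Bochner_Integration.integral_cong) (auto simp: algebra_simps)
  also have "\<dots> = tail_int s y (\<lambda>w. f w * w 1 s) - rate_int s y f"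
  proof -
    have "integrable (mu s) (\<lambda>p. indicator (W \<times> {y..<1}) p * (f (fst p) * fst p 1 s))"
    proof (rule tail_int_dominated(1)[OF s _ _ _ ])
      show "(\<lambda>w. f w * w 1 s) \<in> borel_measurable lam" using f measurable_eval by (rule borel_measurable_times)
      show "\<bar>f w * w 1 s\<bar> \<le> \<bar>f w\<bar> * supnorm T w" if "w \<in> W" for w
        using W_abs_le_supnorm[OF that] by (simp add: abs_mult mult_left_mono)
    qed (use y integrable_abs_times_supnorm[OF f fb] in auto)
    then show ?thesis
      using rate_int_dominated(1)[OF s y f fb]
      by (simp add: tail_int_indicator rate_int_indicator)
  qed
  finally show ?thesis by simp
qed

lemma grad_kernel_outside: "x \<le> y \<or> 1 \<le> x \<Longrightarrow> grad_kernel s y g p x = 0"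
  unfolding grad_kernel_def by (auto simp: indicator_def)

lemma measurable_grad_kernel_integral:
  assumes s: "s \<in> {0..T}" and g: "g \<in> borel_measurable lam"
  shows "(\<lambda>x. \<integral>p. grad_kernel s y g p x \<partial>mu s) \<in> borel_measurable lborel"
proof -
  interpret Ms: prob_space "mu s" using mu_prob s by simp
  have "(\<lambda>(x, p). grad_kernel s y g p x) \<in> borel_measurable (lborel \<Otimes>\<^sub>M mu s)"
    using measurable_pair_swap_iff[THEN iffD1, OF measurable_grad_kernel[OF s g]] by simp
  then show ?thesis by (rule Ms.borel_measurable_lebesgue_integral)
qed

lemma abs_grad_kernel_integral_le:
  assumes s: "s \<in> {0..T}" and y: "0 \<le> y" and gb: "\<And>w. w \<in> W \<Longrightarrow> \<bar>g w\<bar> \<le> K"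
  shows "\<bar>\<integral>p. grad_kernel s y g p x \<partial>mu s\<bar> \<le> indicator {0..1} x * (K * CW T W)"
proof -
  interpret Ms: prob_space "mu s" using mu_prob s by simp
  obtain w where "w \<in> W" using W_nonempty by auto
  then have "0 \<le> K" using gb[of w] by linarith
  have "\<bar>\<integral>p. grad_kernel s y g p x \<partial>mu s\<bar> \<le> (\<integral>p. \<bar>grad_kernel s y g p x\<bar> \<partial>mu s)"
    by (rule integral_abs_bound)
  also have "\<dots> \<le> (\<integral>p. indicator {0..1} x * (K * CW T W) \<partial>mu s)"
    using abs_grad_kernel_le[OF _ y s gb] space_mu[OF s] \<open>0 \<le> K\<close> CW_nonneg
    by (intro integral_mono') auto
  finally show ?thesis by (simp add: Ms.prob_space)
qed

lemma grad_kernel_integral_tendsto: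
  fixes s y :: "nat \<Rightarrow> real" and f :: "nat \<Rightarrow> fn \<Rightarrow> real"
  assumes s: "\<And>n. s n \<in> {0..T}" "s \<longlonglongrightarrow> s0" "s0 \<in> {0..T}"
    and y: "\<And>n. y n \<in> {0..1}" "y \<longlonglongrightarrow> y0" "y0 \<in> {0..1}"
    and fm: "\<And>n. f n \<in> borel_measurable lam" "f0 \<in> borel_measurable lam"
    and fb: "\<And>n w. w \<in> W \<Longrightarrow> \<bar>f n w\<bar> \<le> K" "\<And>w. w \<in> W \<Longrightarrow> \<bar>f0 w\<bar> \<le> K"
    and conv: "\<And>w. w \<in> W \<Longrightarrow> (\<lambda>n. f n w) \<longlonglongrightarrow> f0 w"
    and x: "x \<noteq> y0"
  shows "(\<lambda>n. \<integral>p. grad_kernel (s n) (y n) (f n) p x \<partial>mu (s n)) \<longlonglongrightarrow> (\<integral>p. grad_kernel s0 y0 f0 p x \<partial>mu s0)"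
proof -
  consider "x < y0" | "1 \<le> x" | "y0 < x" "x < 1" using x by fastforce
  then show ?thesis
  proof cases
    case 1
    have "\<forall>\<^sub>F n in sequentially. x < y n" by (rule order_tendstoD(1)[OF y(2) 1])
    then have "\<forall>\<^sub>F n in sequentially. (\<integral>p. grad_kernel (s n) (y n) (f n) p x \<partial>mu (s n)) = 0"
      by eventually_elim (simp add: grad_kernel_outside)
    then show ?thesis
      using 1 by (simp add: grad_kernel_outside tendsto_eventually)
  next
    case 2
    then show ?thesis by (simp add: grad_kernel_outside)
  next
    case 3
    have x01: "x \<in> {0..1}" using 3 y(3) by auto
    define h where "h n w = f n w * dwdy w x (s n)" for n w
    define h0 where "h0 w = f0 w * dwdy w x s0" for w
    have "integrable lam (\<lambda>w. K * CW T W)"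
      using finite_measure.integrable_const[OF prob_space.finite_measure[OF lam_prob]] by blast
    moreover have "\<bar>h n w\<bar> \<le> K * CW T W" "\<bar>h0 w\<bar> \<le> K * CW T W" if "w \<in> W" for n w
      unfolding h_def h0_def using fb[OF that] abs_dwdy_le_CW[OF CW_fin that x01] s CW_nonneg
      by (auto simp: abs_mult intro: mult_mono')
    moreover have "(\<lambda>n. h n w) \<longlonglongrightarrow> h0 w" if w: "w \<in> W" for w
      unfolding h_def h0_def using s x01
      by (intro tendsto_mult conv w continuous_on_tendsto_compose[OF continuous_on_dwdy_time[OF w x01]]) auto
    moreover have "h n \<in> borel_measurable lam" "h0 \<in> borel_measurable lam" for n
      unfolding h_def h0_def using fm measurable_dwdy 3 x01 s
      by (auto intro!: borel_measurable_times)
    ultimately have "(\<lambda>n. tail_int (s n) (y n) (h n) - tail_int (s n) x (h n))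
        \<longlonglongrightarrow> tail_int s0 y0 h0 - tail_int s0 x h0"
      using s y x01 by (intro tendsto_diff tail_int_tendsto[where G="\<lambda>w. K * CW T W"]) auto
    moreover have "\<forall>\<^sub>F n in sequentially. tail_int (s n) (y n) (h n) - tail_int (s n) x (h n)
        = (\<integral>p. grad_kernel (s n) (y n) (f n) p x \<partial>mu (s n))"
      using order_tendstoD(2)[OF y(2) 3(1)]
    proof eventually_elim
      case (elim n)
      then show ?case
        unfolding h_def using y(1)[of n] 3
        by (intro grad_kernel_integral_measure[symmetric, where K=K] s fm fb) auto
    qed
    moreover have "(\<integral>p. grad_kernel s0 y0 f0 p x \<partial>mu s0) = tail_int s0 y0 h0 - tail_int s0 x h0"
      unfolding h0_def using y(3) 3 by (intro grad_kernel_integral_measure[where K=K] s fm fb) auto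
    ultimately show ?thesis using Lim_transform_eventually by fastforce
  qed
qed

lemma grad_int_tendsto:
  fixes s y :: "nat \<Rightarrow> real" and f :: "nat \<Rightarrow> fn \<Rightarrow> real"
  assumes s: "\<And>n. s n \<in> {0..T}" "s \<longlonglongrightarrow> s0" "s0 \<in> {0..T}"
    and y: "\<And>n. y n \<in> {0..1}" "y \<longlonglongrightarrow> y0" "y0 \<in> {0..1}"
    and fm: "\<And>n. f n \<in> borel_measurable lam" "f0 \<in> borel_measurable lam"
    and fb: "\<And>n w. w \<in> W \<Longrightarrow> \<bar>f n w\<bar> \<le> K" "\<And>w. w \<in> W \<Longrightarrow> \<bar>f0 w\<bar> \<le> K"
    and conv: "\<And>w. w \<in> W \<Longrightarrow> (\<lambda>n. f n w) \<longlonglongrightarrow> f0 w"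
  shows "(\<lambda>n. grad_int (s n) (y n) (f n)) \<longlonglongrightarrow> grad_int s0 y0 f0"
proof -
  have "(\<lambda>n. \<integral>x. (\<integral>p. grad_kernel (s n) (y n) (f n) p x \<partial>mu (s n)) \<partial>lborel)
      \<longlonglongrightarrow> (\<integral>x. (\<integral>p. grad_kernel s0 y0 f0 p x \<partial>mu s0) \<partial>lborel)"
  proof (rule integral_dominated_convergence[where w="\<lambda>x. indicator {0..1::real} x * (K * CW T W)"])
    show "(\<lambda>x. \<integral>p. grad_kernel s0 y0 f0 p x \<partial>mu s0) \<in> borel_measurable lborel"
      by (rule measurable_grad_kernel_integral[OF s(3) fm(2)])
    show "(\<lambda>x. \<integral>p. grad_kernel (s n) (y n) (f n) p x \<partial>mu (s n)) \<in> borel_measurable lborel" for n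
      by (rule measurable_grad_kernel_integral[OF s(1) fm(1)])
    show "integrable lborel (\<lambda>x. indicator {0..1::real} x * (K * CW T W))"
      by (intro integrable_mult_left integrable_real_indicator) auto
    show "AE x in lborel. norm (\<integral>p. grad_kernel (s n) (y n) (f n) p x \<partial>mu (s n))
        \<le> indicator {0..1} x * (K * CW T W)" for n
      using abs_grad_kernel_integral_le[OF s(1), of "y n" "f n" K] y(1)[of n] fb(1) by (intro AE_I2) auto
    show "AE x in lborel. (\<lambda>n. \<integral>p. grad_kernel (s n) (y n) (f n) p x \<partial>mu (s n))
        \<longlonglongrightarrow> (\<integral>p. grad_kernel s0 y0 f0 p x \<partial>mu s0)"
      using AE_lborel_singleton[of y0]
      by eventually_elim (rule grad_kernel_integral_tendsto[OF s y fm fb conv])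
  qed
  then show ?thesis using y(1,3) by (simp add: grad_int_eq_kernel)
qed

lemma rate_int_tendsto:
  fixes s y :: "nat \<Rightarrow> real"
  assumes s: "\<And>n. s n \<in> {0..T}" "s \<longlonglongrightarrow> s0" "s0 \<in> {0..T}"
    and y: "\<And>n. y n \<in> {0..1}" "y \<longlonglongrightarrow> y0" "y0 \<in> {0..1}"
    and fm: "f \<in> borel_measurable lam" and fb: "\<And>w. w \<in> W \<Longrightarrow> \<bar>f w\<bar> \<le> K"
  shows "(\<lambda>n. rate_int (s n) (y n) f) \<longlonglongrightarrow> rate_int s0 y0 f"
proof -
  obtain w0 where "w0 \<in> W" using W_nonempty by auto
  then have K0: "K \<ge> 0" using fb[of w0] by linarith
  have gm: "(\<lambda>w. f w * w 1 t) \<in> borel_measurable lam" for t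
    using fm measurable_eval by (rule borel_measurable_times)
  have Gi: "integrable lam (\<lambda>w. K * supnorm T w)" using MW_fin by simp
  have gb: "\<bar>f w * w 1 t\<bar> \<le> K * supnorm T w" if "w \<in> W" for w t
    using fb[OF that] W_abs_le_supnorm[OF that, of 1 t] T_pos K0
    by (auto simp: abs_mult intro: mult_mono)
  have gc: "(\<lambda>n. f w * w 1 (s n)) \<longlonglongrightarrow> f w * w 1 s0" if w: "w \<in> W" for w
  proof -
    have "(\<lambda>n. w 1 (s n)) \<longlonglongrightarrow> w 1 s0"
      by (rule continuous_on_tendsto_compose[OF continuous_on_time[OF w] s(2) s(3)]) (use s(1) in auto)
    then show ?thesis by (intro tendsto_mult tendsto_const)
  qed
  have L1: "(\<lambda>n. tail_int (s n) (y n) (\<lambda>w. f w * w 1 (s n))) \<longlonglongrightarrow> tail_int s0 y0 (\<lambda>w. f w * w 1 s0)"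
    by (rule tail_int_tendsto[OF s y gm gm Gi gb gb gc])
  have L2: "(\<lambda>n. grad_int (s n) (y n) f) \<longlonglongrightarrow> grad_int s0 y0 f"
    by (rule grad_int_tendsto[OF s y fm fm fb fb tendsto_const])
  have "(\<lambda>n. tail_int (s n) (y n) (\<lambda>w. f w * w 1 (s n)) - grad_int (s n) (y n) f) \<longlonglongrightarrow> tail_int s0 y0 (\<lambda>w. f w * w 1 s0) - grad_int s0 y0 f"
    by (rule tendsto_diff[OF L1 L2])
  moreover have "rate_int (s n) (y n) f = tail_int (s n) (y n) (\<lambda>w. f w * w 1 (s n)) - grad_int (s n) (y n) f" for n
    by (rule rate_int_by_parts[OF s(1) y(1) fm fb])
  moreover have "rate_int s0 y0 f = tail_int s0 y0 (\<lambda>w. f w * w 1 s0) - grad_int s0 y0 f"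
    by (rule rate_int_by_parts[OF s(3) y(3) fm fb])
  ultimately show ?thesis by simp
qed

lemma rate_int_tendsto_functions:
  assumes s: "s \<in> {0..T}" and y: "y \<in> {0..1}"
    and Fm: "\<And>i. F i \<in> borel_measurable lam" and Fb: "\<And>i w. w \<in> W \<Longrightarrow> \<bar>F i w\<bar> \<le> K"
    and g: "g \<in> borel_measurable lam" and gb: "\<And>w. w \<in> W \<Longrightarrow> \<bar>g w\<bar> \<le> K"
    and conv: "\<And>w. w \<in> W \<Longrightarrow> (\<lambda>i. F i w) \<longlonglongrightarrow> g w"
  shows "(\<lambda>i. rate_int s y (F i)) \<longlonglongrightarrow> rate_int s y g"
proof -
  have D: "(\<lambda>i. \<integral>w. \<bar>F i w - g w\<bar> * supnorm T w \<partial>lam) \<longlonglongrightarrow> (\<integral>w. 0 \<partial>lam)"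
  proof (rule integral_dominated_convergence[where w="\<lambda>w. 2 * K * supnorm T w"])
    show "(\<lambda>w. 0::real) \<in> borel_measurable lam" by simp
    show "(\<lambda>w. \<bar>F i w - g w\<bar> * supnorm T w) \<in> borel_measurable lam" for i
      using Fm g MW_fin by measurable
    show "integrable lam (\<lambda>w. 2 * K * supnorm T w)" using MW_fin by simp
    show "AE w in lam. (\<lambda>i. \<bar>F i w - g w\<bar> * supnorm T w) \<longlonglongrightarrow> 0"
    proof (rule AE_I2)
      fix w assume "w \<in> space lam"
      then have "(\<lambda>i. \<bar>F i w - g w\<bar> * supnorm T w) \<longlonglongrightarrow> \<bar>g w - g w\<bar> * supnorm T w"
        using lam_space by (intro tendsto_intros conv) auto
      then show "(\<lambda>i. \<bar>F i w - g w\<bar> * supnorm T w) \<longlonglongrightarrow> 0" by simp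
    qed
    show "AE w in lam. norm (\<bar>F i w - g w\<bar> * supnorm T w) \<le> 2 * K * supnorm T w" for i
    proof (rule AE_I2)
      fix w assume "w \<in> space lam"
      then have w: "w \<in> W" using lam_space by simp
      have "\<bar>F i w - g w\<bar> \<le> 2 * K" using Fb[OF w, of i] gb[OF w] by linarith
      then show "norm (\<bar>F i w - g w\<bar> * supnorm T w) \<le> 2 * K * supnorm T w"
        using W_supnorm_nonneg[OF w] by (auto simp: abs_mult intro: mult_right_mono)
    qed
  qed
  have "(\<lambda>i. rate_int s y (F i) - rate_int s y g) \<longlonglongrightarrow> 0"
  proof (rule Lim_null_comparison[OF _ D[simplified]])
    show "\<forall>\<^sub>F i in sequentially. norm (rate_int s y (F i) - rate_int s y g)
        \<le> (\<integral>w. \<bar>F i w - g w\<bar> * supnorm T w \<partial>lam)"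
      using abs_rate_int_diff_le[OF s y Fm Fb g gb] by (intro always_eventually allI) simp
  qed
  then show ?thesis by (simp add: LIM_zero_iff)
qed

end

locale balanced_curve = flow_measures +
  fixes a :: "real \<Rightarrow> real" and t0 y0 :: real
  assumes t0: "t0 \<in> {0..T}"
    and curve_continuous: "continuous_on {t0..T} a"
    and curve_in_unit: "\<And>t. t \<in> {t0..T} \<Longrightarrow> a t \<in> {0..1}"
    and curve_init: "a t0 = y0"
    and curve_balance: "\<And>t B. t \<in> {t0..T} \<Longrightarrow> B \<in> sets lam \<Longrightarrow> measure (mu t) (B \<times> {a t..<1}) =
       measure (mu t0) (B \<times> {y0..<1}) - (\<integral>s\<in>{t0..t}. (\<integral>p\<in>B \<times> {a s..<1}. fst p (snd p) s \<partial>mu s) \<partial>lborel)"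
begin

lemma in_0_T_if_in_t0_T: "t \<in> {t0..T} \<Longrightarrow> t \<in> {0..T}" using t0 by auto

lemma continuous_on_rate_int_curve:
  assumes g: "g \<in> borel_measurable lam" and gb: "\<And>w. w \<in> W \<Longrightarrow> \<bar>g w\<bar> \<le> K"
  shows "continuous_on {t0..T} (\<lambda>s. rate_int s (a s) g)"
proof (rule continuous_on_sequentiallyI)
  fix u :: "nat \<Rightarrow> real" and x assume u: "\<forall>n. u n \<in> {t0..T}" and x: "x \<in> {t0..T}" and ux: "u \<longlonglongrightarrow> x"
  have "(\<lambda>n. a (u n)) \<longlonglongrightarrow> a x"
    by (rule continuous_on_tendsto_compose[OF curve_continuous ux x]) (use u in auto)
  moreover have "u n \<in> {0..T}" "a (u n) \<in> {0..1}" for n using u in_0_T_if_in_t0_T curve_in_unit by auto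
  moreover have "x \<in> {0..T}" "a x \<in> {0..1}" using x in_0_T_if_in_t0_T curve_in_unit by auto
  ultimately show "(\<lambda>n. rate_int (u n) (a (u n)) g) \<longlonglongrightarrow> rate_int x (a x) g"
    by (intro rate_int_tendsto[OF _ ux _ _ _ _ g gb])
qed

lemma set_integrable_rate_int_curve:
  assumes g: "g \<in> borel_measurable lam" and gb: "\<And>w. w \<in> W \<Longrightarrow> \<bar>g w\<bar> \<le> K"
  and t: "t \<le> T"
  shows "set_integrable lborel {t0..t} (\<lambda>s. rate_int s (a s) g)"
proof -
  have "continuous_on {t0..t} (\<lambda>s. rate_int s (a s) g)"
    by (rule continuous_on_subset[OF continuous_on_rate_int_curve[OF g gb]]) (use t in auto)
  then show ?thesis unfolding set_integrable_def by (rule borel_integrable_compact[OF compact_Icc])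
qed

definition balance_defect :: "real \<Rightarrow> (fn \<Rightarrow> real) \<Rightarrow> real" where
  "balance_defect t g = tail_int t (a t) g - tail_int t0 y0 g + (\<integral>s\<in>{t0..t}. rate_int s (a s) g \<partial>lborel)"

lemma y0_in_unit: "y0 \<in> {0..1}" using curve_in_unit[of t0] curve_init t0 by auto

lemma balance_defect_indicator:
  assumes t: "t \<in> {t0..T}" and B: "B \<in> sets lam"
  shows "balance_defect t (indicator B) = 0"
proof -
  have "rate_int s (a s) (indicator B) = (\<integral>p\<in>B \<times> {a s..<1}. fst p (snd p) s \<partial>mu s)" for s
    unfolding rate_int_indicator set_lebesgue_integral_def using sets.sets_into_space[OF B] lam_space
    by (intro Bochner_Integration.integral_cong[OF refl]) (auto simp: indicator_def)
  then show ?thesis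
    unfolding balance_defect_def
    using curve_balance[OF t B] curve_in_unit[OF t] y0_in_unit
      tail_int_indicator_eq_measure[OF in_0_T_if_in_t0_T[OF t] B] tail_int_indicator_eq_measure[OF t0 B]
    by simp
qed

lemma balance_defect_add:
  assumes t: "t \<in> {t0..T}" and g: "g \<in> borel_measurable lam" "\<And>w. w \<in> W \<Longrightarrow> \<bar>g w\<bar> \<le> K"
    and h: "h \<in> borel_measurable lam" "\<And>w. w \<in> W \<Longrightarrow> \<bar>h w\<bar> \<le> K'"
  shows "balance_defect t (\<lambda>w. g w + h w) = balance_defect t g + balance_defect t h"
proof -
  have at: "a t \<in> {0..1}" using curve_in_unit[OF t] .
  have N1: "tail_int t (a t) (\<lambda>w. g w + h w) = tail_int t (a t) g + tail_int t (a t) h"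
    using at by (intro tail_int_add(1) tail_int_bounded(1)[OF in_0_T_if_in_t0_T[OF t] _ g] tail_int_bounded(1)[OF in_0_T_if_in_t0_T[OF t] _ h]) auto
  have N2: "tail_int t0 y0 (\<lambda>w. g w + h w) = tail_int t0 y0 g + tail_int t0 y0 h"
    using y0_in_unit by (intro tail_int_add(1) tail_int_bounded(1)[OF t0 _ g] tail_int_bounded(1)[OF t0 _ h]) auto
  have "(\<integral>s\<in>{t0..t}. rate_int s (a s) (\<lambda>w. g w + h w) \<partial>lborel) = (\<integral>s\<in>{t0..t}. rate_int s (a s) g + rate_int s (a s) h \<partial>lborel)"
  proof (rule set_lebesgue_integral_cong)
    show "{t0..t} \<in> sets lborel" by simp
    show "\<forall>s. s \<in> {t0..t} \<longrightarrow> rate_int s (a s) (\<lambda>w. g w + h w) = rate_int s (a s) g + rate_int s (a s) h"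
    proof (intro allI impI)
      fix s assume "s \<in> {t0..t}"
      then have s: "s \<in> {t0..T}" using t by auto
      show "rate_int s (a s) (\<lambda>w. g w + h w) = rate_int s (a s) g + rate_int s (a s) h"
        by (rule rate_int_add[OF in_0_T_if_in_t0_T[OF s] curve_in_unit[OF s] g h])
    qed
  qed
  also have "\<dots> = (\<integral>s\<in>{t0..t}. rate_int s (a s) g \<partial>lborel) + (\<integral>s\<in>{t0..t}. rate_int s (a s) h \<partial>lborel)"
    using t by (intro set_integral_add(2) set_integrable_rate_int_curve[OF g] set_integrable_rate_int_curve[OF h]) auto
  finally show ?thesis unfolding balance_defect_def using N1 N2 by simp
qed

lemma balance_defect_cmult: "balance_defect t (\<lambda>w. c * g w) = c * balance_defect t g"
  unfolding balance_defect_def by (simp add: tail_int_cmult rate_int_cmult algebra_simps)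

lemma balance_defect_cong:
  assumes t: "t \<in> {t0..T}" and e: "\<And>w. w \<in> W \<Longrightarrow> g w = h w"
  shows "balance_defect t g = balance_defect t h"
proof -
  have "(\<integral>s\<in>{t0..t}. rate_int s (a s) g \<partial>lborel) = (\<integral>s\<in>{t0..t}. rate_int s (a s) h \<partial>lborel)"
  proof (rule set_lebesgue_integral_cong)
    show "{t0..t} \<in> sets lborel" by simp
    show "\<forall>s. s \<in> {t0..t} \<longrightarrow> rate_int s (a s) g = rate_int s (a s) h"
    proof (intro allI impI)
      fix s assume "s \<in> {t0..t}"
      then have s: "s \<in> {t0..T}" using t by auto
      show "rate_int s (a s) g = rate_int s (a s) h" by (rule rate_int_cong[OF in_0_T_if_in_t0_T[OF s] e])
    qed
  qed
  then show ?thesis unfolding balance_defect_def using tail_int_cong[OF in_0_T_if_in_t0_T[OF t] e] tail_int_cong[OF t0 e] by simp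
qed

lemma balance_defect_simple:
  assumes t: "t \<in> {t0..T}" and C: "finite C" and A: "\<And>c. c \<in> C \<Longrightarrow> A c \<in> sets lam"
  shows "balance_defect t (\<lambda>w. \<Sum>c\<in>C. c * indicator (A c) w) = 0"
  using C A
proof (induction C rule: finite_induct)
  case empty
  have "balance_defect t (\<lambda>w. 0 * indicator {} w) = 0 * balance_defect t (indicator {})" by (rule balance_defect_cmult)
  then show ?case by simp
next
  case (insert c C)
  have m1: "(\<lambda>w. c * indicator (A c) w) \<in> borel_measurable lam"
    using insert.prems by (intro borel_measurable_times borel_measurable_indicator) auto
  have b1: "\<bar>c * indicator (A c) w\<bar> \<le> \<bar>c\<bar>" for w by (auto simp: indicator_def)
  have m2: "(\<lambda>w. \<Sum>c\<in>C. c * indicator (A c) w) \<in> borel_measurable lam"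
    using insert.prems by (intro borel_measurable_sum borel_measurable_times borel_measurable_indicator) auto
  have b2: "\<bar>\<Sum>c\<in>C. c * indicator (A c) w\<bar> \<le> (\<Sum>c\<in>C. \<bar>c\<bar>)" for w
    by (rule order_trans[OF sum_abs sum_mono]) (auto simp: indicator_def)
  have "balance_defect t (\<lambda>w. \<Sum>c\<in>insert c C. c * indicator (A c) w) = balance_defect t (\<lambda>w. c * indicator (A c) w + (\<Sum>c\<in>C. c * indicator (A c) w))"
    by (simp only: sum.insert[OF insert.hyps(1) insert.hyps(2)])
  also have "\<dots> = balance_defect t (\<lambda>w. c * indicator (A c) w) + balance_defect t (\<lambda>w. \<Sum>c\<in>C. c * indicator (A c) w)"
    by (rule balance_defect_add[OF t m1 b1 m2 b2])
  also have "balance_defect t (\<lambda>w. c * indicator (A c) w) = c * balance_defect t (indicator (A c))" by (rule balance_defect_cmult)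
  also have "balance_defect t (indicator (A c)) = 0" using balance_defect_indicator[OF t] insert.prems by simp
  also have "balance_defect t (\<lambda>w. \<Sum>c\<in>C. c * indicator (A c) w) = 0" using insert.IH insert.prems by simp
  finally show ?case by simp
qed

lemma balance_defect_simple_function:
  assumes t: "t \<in> {t0..T}" and F: "simple_function lam F"
  shows "balance_defect t F = 0"
proof -
  have "balance_defect t F = balance_defect t (\<lambda>w. \<Sum>c\<in>F ` space lam. c * indicator (F -` {c} \<inter> space lam) w)"
  proof (rule balance_defect_cong[OF t])
    fix w assume "w \<in> W"
    then have "F w = (\<Sum>c\<in>F ` space lam. indicator (F -` {c} \<inter> space lam) w *\<^sub>R c)"
      using lam_space by (intro simple_function_indicator_representation_banach[OF F]) simp
    also have "\<dots> = (\<Sum>c\<in>F ` space lam. c * indicator (F -` {c} \<inter> space lam) w)"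
      by (rule sum.cong[OF refl]) (simp only: real_scaleR_def mult.commute)
    finally show "F w = (\<Sum>c\<in>F ` space lam. c * indicator (F -` {c} \<inter> space lam) w)" .
  qed
  also have "\<dots> = 0"
    using simple_functionD[OF F] by (intro balance_defect_simple[OF t]) auto
  finally show ?thesis .
qed

lemma balance_defect_tendsto:
  assumes t: "t \<in> {t0..T}"
    and Fm: "\<And>i. F i \<in> borel_measurable lam" and Fb: "\<And>i w. w \<in> W \<Longrightarrow> \<bar>F i w\<bar> \<le> K"
    and g: "g \<in> borel_measurable lam" and gb: "\<And>w. w \<in> W \<Longrightarrow> \<bar>g w\<bar> \<le> K"
    and conv: "\<And>w. w \<in> W \<Longrightarrow> (\<lambda>i. F i w) \<longlonglongrightarrow> g w"
  shows "(\<lambda>i. balance_defect t (F i)) \<longlonglongrightarrow> balance_defect t g"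
proof -
  interpret L: prob_space lam by (rule lam_prob)
  have K: "integrable lam (\<lambda>w. K)" by simp
  have N1: "(\<lambda>i. tail_int t (a t) (F i)) \<longlonglongrightarrow> tail_int t (a t) g"
    using in_0_T_if_in_t0_T[OF t] curve_in_unit[OF t] by (intro tail_int_tendsto[OF _ _ _ _ _ _ Fm g K Fb gb conv]) auto
  have N2: "(\<lambda>i. tail_int t0 y0 (F i)) \<longlonglongrightarrow> tail_int t0 y0 g"
    using t0 y0_in_unit by (intro tail_int_tendsto[OF _ _ _ _ _ _ Fm g K Fb gb conv]) auto
  define MWv where "MWv = (\<integral>w. supnorm T w \<partial>lam)"
  have Rb: "\<bar>rate_int s (a s) (F i)\<bar> \<le> K * MWv" if s: "s \<in> {t0..T}" for s i
  proof -
    have "\<bar>rate_int s (a s) (F i)\<bar> \<le> (\<integral>w. \<bar>F i w\<bar> * supnorm T w \<partial>lam)"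
      by (rule rate_int_dominated(2)[OF in_0_T_if_in_t0_T[OF s] curve_in_unit[OF s] Fm Fb])
    also have "\<dots> \<le> (\<integral>w. K * supnorm T w \<partial>lam)"
      using integrable_abs_times_supnorm[OF Fm Fb] MW_fin Fb W_supnorm_nonneg lam_space
      by (intro Bochner_Integration.integral_mono) (auto intro: mult_right_mono)
    finally show ?thesis unfolding MWv_def by simp
  qed
  have I: "(\<lambda>i. \<integral>s\<in>{t0..t}. rate_int s (a s) (F i) \<partial>lborel) \<longlonglongrightarrow> (\<integral>s\<in>{t0..t}. rate_int s (a s) g \<partial>lborel)"
    unfolding set_lebesgue_integral_def
  proof (rule integral_dominated_convergence[where w="\<lambda>s. indicator {t0..t} s * (K * MWv)"])
    have tt: "t \<le> T" using t by simp
    show "(\<lambda>s. indicator {t0..t} s *\<^sub>R rate_int s (a s) g) \<in> borel_measurable lborel"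
      using set_integrable_rate_int_curve[OF g gb tt] unfolding set_integrable_def by (rule borel_measurable_integrable)
    show "(\<lambda>s. indicator {t0..t} s *\<^sub>R rate_int s (a s) (F i)) \<in> borel_measurable lborel" for i
      using set_integrable_rate_int_curve[OF Fm Fb tt] unfolding set_integrable_def by (rule borel_measurable_integrable)
    show "integrable lborel (\<lambda>s. indicator {t0..t} s * (K * MWv))"
      using emeasure_bounded_finite[of "{t0..t}"]
      by (intro integrable_mult_left integrable_real_indicator) (auto simp: less_top)
    show "AE s in lborel. (\<lambda>i. indicator {t0..t} s *\<^sub>R rate_int s (a s) (F i)) \<longlonglongrightarrow> indicator {t0..t} s *\<^sub>R rate_int s (a s) g"
      using t by (intro AE_I2) (auto simp: indicator_def
          intro: rate_int_tendsto_functions[OF in_0_T_if_in_t0_T curve_in_unit Fm Fb g gb conv])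
    show "AE s in lborel. norm (indicator {t0..t} s *\<^sub>R rate_int s (a s) (F i)) \<le> indicator {t0..t} s * (K * MWv)" for i
      using t Rb by (intro AE_I2) (auto simp: indicator_def)
  qed
  show ?thesis
    unfolding balance_defect_def by (intro tendsto_add tendsto_diff N1 N2 I)
qed

lemma balance_defect_zero:
  assumes t: "t \<in> {t0..T}" and g: "g \<in> borel_measurable lam" and gb: "\<And>w. w \<in> W \<Longrightarrow> \<bar>g w\<bar> \<le> K"
  shows "balance_defect t g = 0"
proof -
  obtain F where F: "\<And>i. simple_function lam (F i)" "\<And>x. x \<in> space lam \<Longrightarrow> (\<lambda>i. F i x) \<longlonglongrightarrow> g x"
    "\<And>i x. x \<in> space lam \<Longrightarrow> dist (F i x) 0 \<le> 2 * dist (g x) 0"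
    using borel_measurable_implies_sequence_metric[OF g, of 0] by blast
  have Fb: "\<bar>F i w\<bar> \<le> 2 * K" if "w \<in> W" for i w
    using F(3)[of w i] gb[OF that] that lam_space by simp
  have gb2: "\<bar>g w\<bar> \<le> 2 * K" if "w \<in> W" for w
    using gb[OF that] by (smt (verit) abs_ge_zero)
  have "(\<lambda>i. balance_defect t (F i)) \<longlonglongrightarrow> balance_defect t g"
    by (rule balance_defect_tendsto[OF t borel_measurable_simple_function[OF F(1)] _ g])
       (use Fb gb2 F(2)[unfolded lam_space] in blast)+
  moreover have "balance_defect t (F i) = 0" for i
    by (rule balance_defect_simple_function[OF t F(1)])
  ultimately show ?thesis using LIMSEQ_unique[OF _ tendsto_const[of 0]] by simp
qed

lemma tail_int_curve:
  assumes t: "t \<in> {t0..T}" and g: "g \<in> borel_measurable lam" and gb: "\<And>w. w \<in> W \<Longrightarrow> \<bar>g w\<bar> \<le> K"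
  shows "tail_int t (a t) g = tail_int t0 y0 g - (\<integral>s\<in>{t0..t}. rate_int s (a s) g \<partial>lborel)"
  using balance_defect_zero[OF t g gb] unfolding balance_defect_def by simp

lemma tail_int_curve_has_derivative:
  assumes r: "r \<in> {t0..t1}" and t1: "t1 \<le> T"
    and g: "g \<in> borel_measurable lam" and gb: "\<And>w. w \<in> W \<Longrightarrow> \<bar>g w\<bar> \<le> K"
  shows "((\<lambda>x. tail_int x (a x) g) has_real_derivative - rate_int r (a r) g) (at r within {t0..t1})"
proof -
  have "continuous_on {t0..t1} (\<lambda>s. rate_int s (a s) g)"
    by (rule continuous_on_subset[OF continuous_on_rate_int_curve[OF g gb]]) (use t1 in auto)
  from integral_has_vector_derivative[OF this r]
  have "((\<lambda>x. tail_int t0 y0 g - integral {t0..x} (\<lambda>s. rate_int s (a s) g))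
      has_real_derivative - rate_int r (a r) g) (at r within {t0..t1})"
    by (auto intro!: derivative_eq_intros simp: has_real_derivative_iff_has_vector_derivative)
  then show ?thesis
  proof (rule has_field_derivative_transform_within[OF _ zero_less_one r])
    fix x assume x: "x \<in> {t0..t1}"
    then show "tail_int t0 y0 g - integral {t0..x} (\<lambda>s. rate_int s (a s) g) = tail_int x (a x) g"
      using tail_int_curve[OF _ g gb, of x] t1
        set_borel_integral_eq_integral(2)[OF set_integrable_rate_int_curve[OF g gb, of x]] by auto
  qed
qed

end

locale duhamel = balanced_curve +
  fixes t1 :: real and B :: "fn set"
  assumes t1: "t1 \<in> {t0..T}" and B: "B \<in> sets lam"
begin

text \<open>At \<open>r = t1\<close> the discounted tail is the left-hand side of the formula, at \<open>r = t0\<close> it is the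
  first term on the right; its derivative in \<open>r\<close> is the discounted gradient term.\<close>

definition discount :: "real \<Rightarrow> fn \<Rightarrow> real" where
  "discount r w = indicator B w * exp (- Omega w r t1)"

definition discounted_tail :: "real \<Rightarrow> real" where
  "discounted_tail r = tail_int r (a r) (discount r)"

definition discounted_grad :: "real \<Rightarrow> real" where
  "discounted_grad r = grad_int r (a r) (discount r)"

lemma t0_nonneg: "0 \<le> t0" using t0 by simp
lemma t1_le_T: "t1 \<le> T" using t1 by simp
lemma t0_le_t1: "t0 \<le> t1" using t1 by simp
lemma in_t0_T_if_in_t0_t1: "r \<in> {t0..t1} \<Longrightarrow> r \<in> {t0..T}" using t1 by auto
lemma in_0_T_if_in_t0_t1: "r \<in> {t0..t1} \<Longrightarrow> r \<in> {0..T}" using t1 t0 by auto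
lemma curve_in_unit_if_in_t0_t1: "r \<in> {t0..t1} \<Longrightarrow> a r \<in> {0..1}" using curve_in_unit in_t0_T_if_in_t0_t1 by blast

lemma measurable_discount: "0 \<le> r \<Longrightarrow> discount r \<in> borel_measurable lam"
  unfolding discount_def using B measurable_Omega[of r t1] t1_le_T
  by (intro borel_measurable_times borel_measurable_indicator borel_measurable_exp borel_measurable_uminus) auto

lemma abs_discount_le_1:
  "w \<in> W \<Longrightarrow> 0 \<le> r \<Longrightarrow> \<bar>discount r w\<bar> \<le> 1"
  unfolding discount_def using Omega_nonneg[of w r t1] t1_le_T by (auto simp: indicator_def)

lemma discount_has_derivative:
  assumes w: "w \<in> W" and r: "r \<in> {t0..t1}"
  shows "((\<lambda>r. discount r w) has_real_derivative (discount r w * w 1 r)) (at r within {t0..t1})"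
proof -
  have d: "((\<lambda>r. - Omega w r t1) has_real_derivative w 1 r) (at r within {t0..t1})"
    using DERIV_minus[OF Omega_has_derivative[OF w t0_nonneg r t1_le_T]] by simp
  have "((\<lambda>r. exp (- Omega w r t1)) has_real_derivative exp (- Omega w r t1) * w 1 r) (at r within {t0..t1})"
    by (rule DERIV_chain2[OF DERIV_exp d])
  then have "((\<lambda>r. indicator B w * exp (- Omega w r t1)) has_real_derivative indicator B w * (exp (- Omega w r t1) * w 1 r)) (at r within {t0..t1})"
    by (rule DERIV_cmult)
  then show ?thesis unfolding discount_def by (simp add: mult.assoc)
qed

lemma continuous_on_discount:
  assumes w: "w \<in> W"
  shows "continuous_on {t0..t1} (\<lambda>r. discount r w)"
  unfolding continuous_on_eq_continuous_within
  using discount_has_derivative[OF w] DERIV_continuous by blast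

lemma discount_lipschitz:
  assumes w: "w \<in> W" and r: "r \<in> {t0..t1}" "r' \<in> {t0..t1}"
  shows "\<bar>discount r' w - discount r w\<bar> \<le> \<bar>r' - r\<bar> * supnorm T w"
proof -
  have "\<bar>exp (- Omega w r' t1) - exp (- Omega w r t1)\<bar> \<le> \<bar>Omega w r' t1 - Omega w r t1\<bar>"
    using r t0_nonneg t1_le_T by (intro exp_neg_lipschitz Omega_nonneg[OF w]) auto
  also have "\<dots> \<le> \<bar>r' - r\<bar> * supnorm T w"
    using r t0_nonneg t1_le_T Omega_lipschitz[OF w, of r t1 r'] by (simp add: mult.commute)
  finally have e: "\<bar>exp (- Omega w r' t1) - exp (- Omega w r t1)\<bar> \<le> \<bar>r' - r\<bar> * supnorm T w" .
  have "discount r' w - discount r w = indicator B w * (exp (- Omega w r' t1) - exp (- Omega w r t1))"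
    unfolding discount_def by (simp add: algebra_simps)
  then show ?thesis using e W_supnorm_nonneg[OF w] T_pos
    by (auto simp: indicator_def)
qed

lemma tail_int_discount_quotient_tendsto:
  assumes r: "r \<in> {t0..t1}"
  shows "((\<lambda>x. tail_int x (a x) (\<lambda>w. (discount x w - discount r w) / (x - r)))
          \<longlongrightarrow> tail_int r (a r) (\<lambda>w. discount r w * w 1 r)) (at r within {t0..t1})"
  unfolding tendsto_at_iff_sequentially comp_def
proof (intro allI impI)
  fix X :: "nat \<Rightarrow> real" assume X: "\<forall>i. X i \<in> {t0..t1} - {r}" and Xr: "X \<longlonglongrightarrow> r"
  have XS: "X i \<in> {t0..t1}" "X i \<noteq> r" for i using X by auto
  show "(\<lambda>i. tail_int (X i) (a (X i)) (\<lambda>w. (discount (X i) w - discount r w) / (X i - r)))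
      \<longlonglongrightarrow> tail_int r (a r) (\<lambda>w. discount r w * w 1 r)"
  proof (rule tail_int_tendsto[OF _ Xr _ _ _ _ _ _ MW_fin])
    show "X i \<in> {0..T}" "a (X i) \<in> {0..1}" for i
      using in_0_T_if_in_t0_t1[OF XS(1)] curve_in_unit_if_in_t0_t1[OF XS(1)] by auto
    show "r \<in> {0..T}" "a r \<in> {0..1}"
      using in_0_T_if_in_t0_t1[OF r] curve_in_unit_if_in_t0_t1[OF r] by auto
    show "(\<lambda>i. a (X i)) \<longlonglongrightarrow> a r"
      using XS in_t0_T_if_in_t0_t1
      by (intro continuous_on_tendsto_compose[OF curve_continuous Xr in_t0_T_if_in_t0_t1[OF r]]) auto
    show "(\<lambda>w. (discount (X i) w - discount r w) / (X i - r)) \<in> borel_measurable lam" for i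
      using measurable_discount[of "X i"] measurable_discount[of r] in_0_T_if_in_t0_t1[OF XS(1)]
        in_0_T_if_in_t0_t1[OF r]
      by (intro borel_measurable_divide borel_measurable_diff) auto
    show "(\<lambda>w. discount r w * w 1 r) \<in> borel_measurable lam"
      using measurable_discount[of r] in_0_T_if_in_t0_t1[OF r] measurable_eval
      by (intro borel_measurable_times) auto
    show "\<bar>(discount (X i) w - discount r w) / (X i - r)\<bar> \<le> supnorm T w" if w: "w \<in> W" for i w
      using discount_lipschitz[OF w r XS(1)] XS(2) by (simp add: abs_divide divide_le_eq mult.commute)
    show "\<bar>discount r w * w 1 r\<bar> \<le> supnorm T w" if w: "w \<in> W" for w
      using abs_discount_le_1[OF w, of r] in_0_T_if_in_t0_t1[OF r] W_abs_le_supnorm[OF w, of 1 r]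
      by (simp add: abs_mult) (metis abs_ge_zero mult_left_le_one_le mult.commute order_trans)
    show "(\<lambda>i. (discount (X i) w - discount r w) / (X i - r)) \<longlonglongrightarrow> discount r w * w 1 r"
      if w: "w \<in> W" for w
      using discount_has_derivative[OF w r] X Xr
      unfolding has_field_derivative_iff tendsto_at_iff_sequentially comp_def by blast
  qed
qed

lemma discounted_tail_has_derivative:
  assumes r: "r \<in> {t0..t1}"
  shows "(discounted_tail has_real_derivative discounted_grad r) (at r within {t0..t1})"
proof -
  let ?S = "{t0..t1}"
  let ?dq = "\<lambda>x w. (discount x w - discount r w) / (x - r)"
  have r0: "0 \<le> r" using in_0_T_if_in_t0_t1[OF r] by simp
  note dr = measurable_discount[OF r0] abs_discount_le_1[OF _ r0]
  have split: "discounted_tail x - discounted_tail r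
      = (x - r) * tail_int x (a x) (?dq x) + (tail_int x (a x) (discount r) - tail_int r (a r) (discount r))"
    if x: "x \<in> ?S" "x \<noteq> r" for x
  proof -
    have x0: "0 \<le> x" "0 \<le> a x" "x \<in> {0..T}"
      using in_0_T_if_in_t0_t1[OF x(1)] curve_in_unit_if_in_t0_t1[OF x(1)] by auto
    have "tail_int x (a x) (discount x) - tail_int x (a x) (discount r)
        = tail_int x (a x) (\<lambda>w. discount x w - discount r w)"
      using tail_int_add(2)[OF tail_int_bounded(1)[OF x0(3,2) measurable_discount abs_discount_le_1]
          tail_int_bounded(1)[OF x0(3,2) dr]] x0 by simp
    also have "\<dots> = (x - r) * tail_int x (a x) (?dq x)"
      using x(2) tail_int_cmult[of x "a x" "x - r" "?dq x"] by simp
    finally show ?thesis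
      unfolding discounted_tail_def by simp
  qed
  have "((\<lambda>x. tail_int x (a x) (?dq x) + (tail_int x (a x) (discount r) - tail_int r (a r) (discount r)) / (x - r))
      \<longlongrightarrow> tail_int r (a r) (\<lambda>w. discount r w * w 1 r) + - rate_int r (a r) (discount r)) (at r within ?S)"
    using tail_int_discount_quotient_tendsto[OF r]
      tail_int_curve_has_derivative[OF r t1_le_T dr, unfolded has_field_derivative_iff]
    by (rule tendsto_add)
  also have "tail_int r (a r) (\<lambda>w. discount r w * w 1 r) + - rate_int r (a r) (discount r) = discounted_grad r"
    using rate_int_by_parts[OF in_0_T_if_in_t0_t1[OF r] curve_in_unit_if_in_t0_t1[OF r] dr]
    unfolding discounted_grad_def by simp
  finally have "((\<lambda>x. (discounted_tail x - discounted_tail r) / (x - r)) \<longlongrightarrow> discounted_grad r) (at r within ?S)"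
    by (rule Lim_transform_eventually)
       (auto simp: eventually_at_filter split field_simps intro!: always_eventually)
  then show ?thesis by (simp add: has_field_derivative_iff)
qed

lemma continuous_on_discounted_grad: "continuous_on {t0..t1} discounted_grad"
proof (rule continuous_on_sequentiallyI)
  fix u :: "nat \<Rightarrow> real" and x assume u: "\<forall>n. u n \<in> {t0..t1}" and x: "x \<in> {t0..t1}" and ux: "u \<longlonglongrightarrow> x"
  have un: "u n \<in> {t0..t1}" for n using u by auto
  show "(\<lambda>n. discounted_grad (u n)) \<longlonglongrightarrow> discounted_grad x" unfolding discounted_grad_def
  proof (rule grad_int_tendsto[where K=1])
    show "u n \<in> {0..T}" for n using in_0_T_if_in_t0_t1[OF un] .
    show "u \<longlonglongrightarrow> x" by (rule ux)
    show "x \<in> {0..T}" using in_0_T_if_in_t0_t1[OF x] .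
    show "a (u n) \<in> {0..1}" for n using curve_in_unit_if_in_t0_t1[OF un] .
    show "(\<lambda>n. a (u n)) \<longlonglongrightarrow> a x"
      by (rule continuous_on_tendsto_compose[OF curve_continuous ux in_t0_T_if_in_t0_t1[OF x]]) (use un in_t0_T_if_in_t0_t1 in auto)
    show "a x \<in> {0..1}" using curve_in_unit_if_in_t0_t1[OF x] .
    show "discount (u n) \<in> borel_measurable lam" for n using measurable_discount in_0_T_if_in_t0_t1[OF un] by simp
    show "discount x \<in> borel_measurable lam" using measurable_discount in_0_T_if_in_t0_t1[OF x] by simp
    show "\<bar>discount (u n) w\<bar> \<le> 1" if "w \<in> W" for n w using abs_discount_le_1[OF that] in_0_T_if_in_t0_t1[OF un] by simp
    show "\<bar>discount x w\<bar> \<le> 1" if "w \<in> W" for w using abs_discount_le_1[OF that] in_0_T_if_in_t0_t1[OF x] by simp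
    show "(\<lambda>n. discount (u n) w) \<longlonglongrightarrow> discount x w" if w: "w \<in> W" for w
      by (rule continuous_on_tendsto_compose[OF continuous_on_discount[OF w] ux x]) (use un in auto)
  qed
qed

lemma discounted_tail_ftc:
  "discounted_tail t1 - discounted_tail t0 = (\<integral>s\<in>{t0..t1}. discounted_grad s \<partial>lborel)"
proof -
  have "(discounted_grad has_integral (discounted_tail t1 - discounted_tail t0)) {t0..t1}"
  proof (rule fundamental_theorem_of_calculus[OF t0_le_t1])
    fix x assume "x \<in> {t0..t1}"
    then show "(discounted_tail has_vector_derivative discounted_grad x) (at x within {t0..t1})"
      using discounted_tail_has_derivative by (simp add: has_real_derivative_iff_has_vector_derivative)
  qed
  moreover have "set_integrable lborel {t0..t1} discounted_grad"
    unfolding set_integrable_def by (rule borel_integrable_compact[OF compact_Icc continuous_on_discounted_grad])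
  ultimately show ?thesis
    using set_borel_integral_eq_integral(2) by (metis integral_unique)
qed

lemma B_subset_W: "B \<subseteq> W"
  using sets.sets_into_space[OF B] lam_space by simp

lemma discounted_tail_t1: "discounted_tail t1 = measure (mu t1) (B \<times> {a t1..<1})"
proof -
  have t1S: "t1 \<in> {t0..t1}" using t0_le_t1 by simp
  have "discounted_tail t1 = tail_int t1 (a t1) (indicator B)"
    unfolding discounted_tail_def discount_def
    by (rule tail_int_cong[OF in_0_T_if_in_t0_t1[OF t1S]]) (use Omega_refl t0_nonneg t1_le_T t0_le_t1 in auto)
  then show ?thesis
    using tail_int_indicator_eq_measure[OF in_0_T_if_in_t0_t1[OF t1S] B] curve_in_unit_if_in_t0_t1[OF t1S]
    by simp
qed

lemma discounted_tail_t0: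
  "discounted_tail t0 = (\<integral>p\<in>B \<times> {y0..<1}. exp (- Omega (fst p) t0 t1) \<partial>mu t0)"
  unfolding discounted_tail_def tail_int_def discount_def curve_init set_lebesgue_integral_def
  using B_subset_W by (intro Bochner_Integration.integral_cong[OF refl]) (auto simp: indicator_def)

lemma discounted_grad_eq:
  "discounted_grad s = (\<integral>x\<in>{a s..<1}. (\<integral>p\<in>B \<times> {a s..<x}.
      exp (- Omega (fst p) s t1) * dwdy (fst p) x s \<partial>mu s) \<partial>lborel)"
proof -
  have "(\<integral>p\<in>W \<times> {a s..<x}. discount s (fst p) * dwdy (fst p) x s \<partial>mu s)
      = (\<integral>p\<in>B \<times> {a s..<x}. exp (- Omega (fst p) s t1) * dwdy (fst p) x s \<partial>mu s)" for x
    unfolding discount_def set_lebesgue_integral_def using B_subset_W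
    by (intro Bochner_Integration.integral_cong[OF refl]) (auto simp: indicator_def)
  then show ?thesis unfolding discounted_grad_def grad_int_def by simp
qed

lemma duhamel_formula:
  "measure (mu t1) (B \<times> {a t1..<1}) =
     (\<integral>p\<in>B \<times> {y0..<1}. exp (- Omega (fst p) t0 t1) \<partial>mu t0)
     + (\<integral>s\<in>{t0..t1}. (\<integral>x\<in>{a s..<1}. (\<integral>p\<in>B \<times> {a s..<x}.
          exp (- Omega (fst p) s t1) * dwdy (fst p) x s \<partial>mu s) \<partial>lborel) \<partial>lborel)"
  using discounted_tail_ftc unfolding discounted_tail_t0 discounted_tail_t1 discounted_grad_eq
  by simp

end

lemma Gamma_bounds:
  "T \<ge> 0 \<Longrightarrow> (y0, t0) \<in> Gamma T \<Longrightarrow> y0 \<in> {0..1} \<and> t0 \<in> {0..T}"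
  unfolding Gamma_def Gamma_b_def Gamma_i_def by auto

lemma Gamma_in_Delta:
  "(y0, t0) \<in> Gamma T \<Longrightarrow> s \<in> {t0..T} \<Longrightarrow> t0 \<ge> 0 \<Longrightarrow> ((y0, t0), s) \<in> Delta T"
  unfolding Delta_def Gamma_def Gamma_b_def Gamma_i_def Gamma_t_def by auto

lemma (in flow_measures) balanced_curve_characteristic:
  assumes G: "(y0, t0) \<in> Gamma T"
    and yC_range: "\<forall>(\<gamma>, t)\<in>Delta T. yC \<gamma> t \<in> {0..1}"
    and yC_cont: "continuous_on (Delta T) (\<lambda>(\<gamma>, t). yC \<gamma> t)"
    and yC_init: "\<forall>(y0, t0)\<in>Gamma T. yC (y0, t0) t0 = y0"
    and balance: "\<forall>y0 t0 t. ((y0, t0), t) \<in> Delta T \<longrightarrow> (\<forall>B\<in>sets lam.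
         measure (mu t) (B \<times> {yC (y0, t0) t..<1}) =
           measure (mu t0) (B \<times> {y0..<1})
           - (\<integral>s\<in>{t0..t}. (\<integral>p\<in>B \<times> {yC (y0, t0) s..<1}. fst p (snd p) s \<partial>mu s) \<partial>lborel))"
  shows "balanced_curve T W lam mu (yC (y0, t0)) t0 y0"
proof -
  have t0: "t0 \<in> {0..T}" using Gamma_bounds[OF _ G] T_pos by simp
  have D: "((y0, t0), s) \<in> Delta T" if "s \<in> {t0..T}" for s
    using Gamma_in_Delta[OF G that] t0 by simp
  show ?thesis
  proof (unfold_locales)
    have "continuous_on {t0..T} (\<lambda>s. (\<lambda>(\<gamma>, t). yC \<gamma> t) ((y0, t0), s))"
      by (rule continuous_on_compose2[OF yC_cont]) (use D in \<open>auto intro!: continuous_intros\<close>)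
    then show "continuous_on {t0..T} (yC (y0, t0))" by simp
  qed (use t0 D yC_range yC_init G balance in auto)
qed

theorem lemma6p1:
  fixes T :: real and W :: "fn set" and lam :: "fn measure"
    and sigma :: "fn \<Rightarrow> real \<Rightarrow> real"
    and yC :: "real \<times> real \<Rightarrow> real \<Rightarrow> real"
    and mu :: "real \<Rightarrow> (fn \<times> real) measure"
  assumes T_pos: "T > 0"
    and W_C1: "\<forall>w\<in>W. C1_rect T w"
    and W_nonneg: "\<forall>w\<in>W. \<forall>y\<in>{0..1}. \<forall>t\<in>{0..T}. w y t \<ge> 0"
    and lam_space: "space lam = W"
    and lam_sets: "sets lam = sets (borel_sup T W)"
    and lam_prob: "prob_space lam"
    and MW_fin: "integrable lam (supnorm T)"
    and CW_fin: "bdd_above (CW_set T W)"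
    and sigma_meas: "(\<lambda>(w, z). sigma w z) \<in> borel_measurable (lam \<Otimes>\<^sub>M I01)"
    and sigma_nonneg: "\<forall>w\<in>W. \<forall>z\<in>{0..1}. sigma w z \<ge> 0"
    and sigma_int_w: "\<forall>y\<in>{0..1}. (\<integral>w. sigma w y \<partial>lam) = 1"
    and sigma_int_z: "\<forall>w\<in>W. (\<integral>z\<in>{0..1}. sigma w z \<partial>lborel) = 1"
    \<comment> \<open>the measures mu_t\<close>
    and mu_sets: "\<forall>t\<in>{0..T}. sets (mu t) = sets (lam \<Otimes>\<^sub>M I01)"
    and mu_prob: "\<forall>t\<in>{0..T}. prob_space (mu t)"
    \<comment> \<open>(1) monotonicity\<close>
    and mono_y0: "\<forall>t\<in>{0..T}. \<forall>a b. 0 \<le> a \<and> a \<le> b \<and> b \<le> 1 \<longrightarrow> yC (a, 0) t \<le> yC (b, 0) t"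
    and mono_t0: "\<forall>t\<in>{0..T}. \<forall>a b. 0 \<le> a \<and> a \<le> b \<and> b \<le> t \<longrightarrow> yC (0, b) t \<le> yC (0, a) t"
    and mono_t: "\<forall>\<gamma> t t'. (\<gamma>, t) \<in> Delta T \<and> t \<le> t' \<and> t' \<le> T \<longrightarrow> yC \<gamma> t \<le> yC \<gamma> t'"
    \<comment> \<open>(2) regularity and surjectivity\<close>
    and yC_range: "\<forall>(\<gamma>, t)\<in>Delta T. yC \<gamma> t \<in> {0..1}"
    and yC_cont: "continuous_on (Delta T) (\<lambda>(\<gamma>, t). yC \<gamma> t)"
    and yC_dt: "\<exists>yCt. continuous_on (Delta T) (\<lambda>(\<gamma>, t). yCt \<gamma> t) \<and>
                  (\<forall>(\<gamma>, t)\<in>Delta T. ((\<lambda>t'. yC \<gamma> t') has_real_derivative yCt \<gamma> t)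
                        (at t within {t'. (\<gamma>, t') \<in> Delta T}))"
    and yC_surj: "\<forall>t\<in>{0..T}. (\<lambda>\<gamma>. yC \<gamma> t) ` Gamma_t t = {0..1}"
    \<comment> \<open>(3) Lipschitz-type bound\<close>
    and lip: "\<forall>h. h \<in> borel_measurable lam \<and> (\<forall>w\<in>W. \<bar>h w\<bar> \<le> 1) \<longrightarrow>
               (\<forall>y\<in>{0..1}. \<forall>t\<in>{0..T}. \<forall>y'\<in>{0..1}. \<forall>t'\<in>{0..T}.
                  \<bar>(\<integral>p\<in>W \<times> {y'..<1}. h (fst p) \<partial>mu t') - (\<integral>p\<in>W \<times> {y..<1}. h (fst p) \<partial>mu t)\<bar>
                    \<le> \<bar>y' - y\<bar> + MW T lam * exp (2 * CW T W * T) * \<bar>t' - t\<bar>)"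
    \<comment> \<open>(4) initial/boundary conditions and the balance equation\<close>
    and yC_init: "\<forall>(y0, t0)\<in>Gamma T. yC (y0, t0) t0 = y0"
    and mu0: "mu 0 = density (lam \<Otimes>\<^sub>M I01) (\<lambda>(w, z). ennreal (sigma w z))"
    and mu_marg: "\<forall>t\<in>{0..T}. \<forall>B\<in>sets lam. measure (mu t) (B \<times> {0..<1}) = measure lam B"
    and mu_tail: "\<forall>t\<in>{0..T}. \<forall>y\<in>{0..1}. measure (mu t) (W \<times> {y..<1}) = 1 - y"
    and balance: "\<forall>y0 t0 t. ((y0, t0), t) \<in> Delta T \<longrightarrow> (\<forall>B\<in>sets lam.
         measure (mu t) (B \<times> {yC (y0, t0) t..<1}) =
           measure (mu t0) (B \<times> {y0..<1})
           - (\<integral>s\<in>{t0..t}. (\<integral>p\<in>B \<times> {yC (y0, t0) s..<1}. fst p (snd p) s \<partial>mu s) \<partial>lborel))"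
  shows "\<forall>y0 t0 t. (y0, t0) \<in> Gamma T \<and> t \<in> {t0..T} \<longrightarrow> (\<forall>B\<in>sets lam.
         measure (mu t) (B \<times> {yC (y0, t0) t..<1}) =
           (\<integral>p\<in>B \<times> {y0..<1}. exp (- Omega (fst p) t0 t) \<partial>mu t0)
           + (\<integral>s\<in>{t0..t}.
                (\<integral>x\<in>{yC (y0, t0) s..<1}.
                   (\<integral>p\<in>B \<times> {yC (y0, t0) s..<x}.
                       exp (- Omega (fst p) s t) * dwdy (fst p) x s \<partial>mu s) \<partial>lborel) \<partial>lborel))"
proof (intro allI impI ballI)
  fix y0 t0 t B assume G: "(y0, t0) \<in> Gamma T \<and> t \<in> {t0..T}" and B: "B \<in> sets lam"
  interpret flow_measures T W lam mu
    by (rule flow_measures.intro) fact+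
  interpret balanced_curve T W lam mu "yC (y0, t0)" t0 y0
    using G yC_range yC_cont yC_init balance by (intro balanced_curve_characteristic) auto
  interpret duhamel T W lam mu "yC (y0, t0)" t0 y0 t B
    using G B by unfold_locales auto
  show "measure (mu t) (B \<times> {yC (y0, t0) t..<1}) =
           (\<integral>p\<in>B \<times> {y0..<1}. exp (- Omega (fst p) t0 t) \<partial>mu t0)
           + (\<integral>s\<in>{t0..t}.
                (\<integral>x\<in>{yC (y0, t0) s..<1}.
                   (\<integral>p\<in>B \<times> {yC (y0, t0) s..<x}.
                       exp (- Omega (fst p) s t) * dwdy (fst p) x s \<partial>mu s) \<partial>lborel) \<partial>lborel)"
    by (rule duhamel_formula)
qed

end
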